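(* Let $G\rightrightarrows G_0$ be a Lie groupoid with quotient map $\pi:G_0\to G_0/G$, and $U\subseteq G_0$ open. Then the map $U/G|_U\to G_0/G$ induced by the inclusion $U\hookrightarrow G_0$, where $U/G|_U$ carries the quotient diffeology from $U$ and $G_0/G$ the quotient diffeology from $G_0$, is a diffeomorphism onto its image $\pi(U)$ equipped with the subset diffeology from $G_0/G$. In particular, if a Lie group $\Gamma$ acts smoothly on a manifold $M$ with quotient map $\pi:M\to M/\Gamma$ and $V\subseteq M$ is open, then the quotient diffeology on $\pi(V)$ induced from $V$ coincides with the subset diffeology induced from $M/\Gamma$.
   Context: Lie groupoids: Hausdorff second-countable base, possibly non-Hausdorff arrow manifold, smooth structure maps, source a submersion with Hausdorff fibres; $G|_U$ is the groupoid of arrows with source and target in $U$; $G_0/G$ is the quotient by $x\sim y$ iff there is an arrow $x\to y$. Diffeology: the quotient diffeology on $X/\mathcal R$ consists of maps from open subsets of Cartesian spaces that locally lift to plots of $X$; the subset diffeology on $S\subseteq X$ consists of maps whose composite with the inclusion is a plot. *)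

theory Defs
  imports "HOL-Analysis.Analysis"
begin

text \<open>ck k S f: f is k times continuously differentiable on the open set S
  (via iterated directional derivatives, which is equivalent to C^k in finite dimension).\<close>
fun ck :: "nat \<Rightarrow> ('a::euclidean_space) set \<Rightarrow> ('a \<Rightarrow> 'b::real_normed_vector) \<Rightarrow> bool" where
  "ck 0 S f = continuous_on S f"
| "ck (Suc k) S f =
     ((\<forall>x\<in>S. f differentiable (at x)) \<and>
      (\<forall>v. ck k S (\<lambda>x. frechet_derivative f (at x) v)))"

definition smooth_on :: "('a::euclidean_space) set \<Rightarrow> ('a \<Rightarrow> 'b::real_normed_vector) \<Rightarrow> bool" where
  "smooth_on S f \<longleftrightarrow> (\<forall>k. ck k S f)"

definition smooth_manifold ::
  "'a topology \<Rightarrow> ('a set \<times> ('a \<Rightarrow> 'm::euclidean_space)) set \<Rightarrow> bool" where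
  "smooth_manifold X A \<longleftrightarrow>
     (\<forall>(W,\<phi>)\<in>A. openin X W \<and> open (\<phi> ` W) \<and>
                 homeomorphic_map (subtopology X W) (top_of_set (\<phi> ` W)) \<phi>) \<and>
     (\<forall>x\<in>topspace X. \<exists>(W,\<phi>)\<in>A. x \<in> W) \<and>
     (\<forall>(W1,\<phi>1)\<in>A. \<forall>(W2,\<phi>2)\<in>A.
        smooth_on (\<phi>1 ` (W1 \<inter> W2)) (\<phi>2 \<circ> inv_into W1 \<phi>1))"

definition smooth_map_on ::
  "'a topology \<Rightarrow> ('a set \<times> ('a \<Rightarrow> 'm::euclidean_space)) set \<Rightarrow>
   'b topology \<Rightarrow> ('b set \<times> ('b \<Rightarrow> 'n::euclidean_space)) set \<Rightarrow>
   'a set \<Rightarrow> ('a \<Rightarrow> 'b) \<Rightarrow> bool" where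
  "smooth_map_on X A Y B D f \<longleftrightarrow>
     openin X D \<and> f ` D \<subseteq> topspace Y \<and> continuous_map (subtopology X D) Y f \<and>
     (\<forall>(W,\<phi>)\<in>A. \<forall>(V,\<psi>)\<in>B.
        smooth_on (\<phi> ` (W \<inter> D \<inter> f -` V)) (\<psi> \<circ> f \<circ> inv_into W \<phi>))"

definition smooth_map ::
  "'a topology \<Rightarrow> ('a set \<times> ('a \<Rightarrow> 'm::euclidean_space)) set \<Rightarrow>
   'b topology \<Rightarrow> ('b set \<times> ('b \<Rightarrow> 'n::euclidean_space)) set \<Rightarrow>
   ('a \<Rightarrow> 'b) \<Rightarrow> bool" where
  "smooth_map X A Y B f \<longleftrightarrow> smooth_map_on X A Y B (topspace X) f"

text \<open>Smooth map defined on an arbitrary subset S (used for the embedded submanifold of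
  composable pairs): locally the restriction of a smooth map defined on an open set.\<close>
definition smooth_map_subset ::
  "'a topology \<Rightarrow> ('a set \<times> ('a \<Rightarrow> 'm::euclidean_space)) set \<Rightarrow>
   'b topology \<Rightarrow> ('b set \<times> ('b \<Rightarrow> 'n::euclidean_space)) set \<Rightarrow>
   'a set \<Rightarrow> ('a \<Rightarrow> 'b) \<Rightarrow> bool" where
  "smooth_map_subset X A Y B S f \<longleftrightarrow>
     S \<subseteq> topspace X \<and> f ` S \<subseteq> topspace Y \<and>
     (\<forall>x\<in>S. \<exists>D F. x \<in> D \<and> smooth_map_on X A Y B D F \<and> (\<forall>y\<in>S \<inter> D. F y = f y))"

definition submersion ::
  "'a topology \<Rightarrow> ('a set \<times> ('a \<Rightarrow> 'm::euclidean_space)) set \<Rightarrow>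
   'b topology \<Rightarrow> ('b set \<times> ('b \<Rightarrow> 'n::euclidean_space)) set \<Rightarrow>
   ('a \<Rightarrow> 'b) \<Rightarrow> bool" where
  "submersion X A Y B f \<longleftrightarrow> smooth_map X A Y B f \<and>
     (\<forall>x\<in>topspace X. \<forall>(W,\<phi>)\<in>A. \<forall>(V,\<psi>)\<in>B. x \<in> W \<longrightarrow> f x \<in> V \<longrightarrow>
        range (frechet_derivative (\<psi> \<circ> f \<circ> inv_into W \<phi>) (at (\<phi> x))) = UNIV)"

definition prod_atlas ::
  "('a set \<times> ('a \<Rightarrow> 'm::euclidean_space)) set \<Rightarrow> ('b set \<times> ('b \<Rightarrow> 'n::euclidean_space)) set \<Rightarrow>
   (('a \<times> 'b) set \<times> ('a \<times> 'b \<Rightarrow> 'm \<times> 'n)) set" where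
  "prod_atlas A B = {(W \<times> V, \<lambda>(a,b). (\<phi> a, \<psi> b)) | W \<phi> V \<psi>. (W,\<phi>) \<in> A \<and> (V,\<psi>) \<in> B}"

text \<open>Arrows g go from s g to t g; m g h (= g \<circ> h) is defined when s g = t h;
  u is the unit map and i the inverse.\<close>
definition lie_groupoid ::
  "'g topology \<Rightarrow> ('g set \<times> ('g \<Rightarrow> 'c::euclidean_space)) set \<Rightarrow>
   'o topology \<Rightarrow> ('o set \<times> ('o \<Rightarrow> 'b::euclidean_space)) set \<Rightarrow>
   ('g \<Rightarrow> 'o) \<Rightarrow> ('g \<Rightarrow> 'o) \<Rightarrow> ('g \<Rightarrow> 'g \<Rightarrow> 'g) \<Rightarrow> ('o \<Rightarrow> 'g) \<Rightarrow> ('g \<Rightarrow> 'g) \<Rightarrow> bool" where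
  "lie_groupoid G AG G0 A0 s t m u i \<longleftrightarrow>
     smooth_manifold G AG \<and> smooth_manifold G0 A0 \<and>
     Hausdorff_space G0 \<and> second_countable G0 \<and>
     \<comment> \<open>groupoid axioms\<close>
     (\<forall>g\<in>topspace G. s g \<in> topspace G0 \<and> t g \<in> topspace G0 \<and> i g \<in> topspace G) \<and>
     (\<forall>x\<in>topspace G0. u x \<in> topspace G \<and> s (u x) = x \<and> t (u x) = x) \<and>
     (\<forall>g\<in>topspace G. \<forall>h\<in>topspace G. s g = t h \<longrightarrow>
        m g h \<in> topspace G \<and> s (m g h) = s h \<and> t (m g h) = t g) \<and>
     (\<forall>g\<in>topspace G. \<forall>h\<in>topspace G. \<forall>k\<in>topspace G. s g = t h \<longrightarrow> s h = t k \<longrightarrow>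
        m (m g h) k = m g (m h k)) \<and>
     (\<forall>g\<in>topspace G. m (u (t g)) g = g \<and> m g (u (s g)) = g) \<and>
     (\<forall>g\<in>topspace G. s (i g) = t g \<and> t (i g) = s g \<and>
        m (i g) g = u (s g) \<and> m g (i g) = u (t g)) \<and>
     \<comment> \<open>smoothness of the structure maps\<close>
     submersion G AG G0 A0 s \<and> smooth_map G AG G0 A0 t \<and>
     smooth_map G0 A0 G AG u \<and> smooth_map G AG G AG i \<and>
     smooth_map_subset (prod_topology G G) (prod_atlas AG AG) G AG
        {(g,h). g \<in> topspace G \<and> h \<in> topspace G \<and> s g = t h} (\<lambda>(g,h). m g h) \<and>
     \<comment> \<open>Hausdorff source fibres\<close>
     (\<forall>x\<in>topspace G0. Hausdorff_space (subtopology G {g \<in> topspace G. s g = x}))"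

text \<open>Orbit relation of G restricted to objects in U (for U = whole base: the relation
  defining G_0/G; for U open: the relation defining U/G|_U, since the arrows of G|_U are
  exactly the arrows with source and target in U).\<close>
definition orbit_rel :: "'g topology \<Rightarrow> ('g \<Rightarrow> 'o) \<Rightarrow> ('g \<Rightarrow> 'o) \<Rightarrow> 'o set \<Rightarrow> ('o \<times> 'o) set" where
  "orbit_rel G s t U = {(x,y). x \<in> U \<and> y \<in> U \<and> (\<exists>g\<in>topspace G. s g = x \<and> t g = y)}"

definition mplot ::
  "'a topology \<Rightarrow> ('a set \<times> ('a \<Rightarrow> 'm::euclidean_space)) set \<Rightarrow>
   ('n::euclidean_space) set \<Rightarrow> ('n \<Rightarrow> 'a) \<Rightarrow> bool" where
  "mplot X A D p \<longleftrightarrow> open D \<and> p ` D \<subseteq> topspace X \<and>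
     continuous_map (top_of_set D) X p \<and>
     (\<forall>(W,\<phi>)\<in>A. smooth_on (D \<inter> p -` W) (\<phi> \<circ> p))"

text \<open>A point of the quotient is
  represented by its equivalence class.\<close>
definition qplot ::
  "'a topology \<Rightarrow> ('a set \<times> ('a \<Rightarrow> 'm::euclidean_space)) set \<Rightarrow> 'a set \<Rightarrow> ('a \<times> 'a) set \<Rightarrow>
   ('n::euclidean_space) set \<Rightarrow> ('n \<Rightarrow> 'a set) \<Rightarrow> bool" where
  "qplot X A S R D P \<longleftrightarrow> open D \<and>
     (\<forall>r\<in>D. \<exists>D' q. r \<in> D' \<and> D' \<subseteq> D \<and> mplot X A D' q \<and> q ` D' \<subseteq> S \<and>
                  (\<forall>r'\<in>D'. P r' = R `` {q r'}))"

definition subset_plot :: "('n set \<Rightarrow> ('n \<Rightarrow> 'b) \<Rightarrow> bool) \<Rightarrow> 'b set \<Rightarrow> 'n set \<Rightarrow> ('n \<Rightarrow> 'b) \<Rightarrow> bool" where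
  "subset_plot Pl T D P \<longleftrightarrow> P ` D \<subseteq> T \<and> Pl D P"

definition induced_map :: "('a \<times> 'a) set \<Rightarrow> 'a set \<Rightarrow> 'a set" where
  "induced_map R c = R `` {SOME x. x \<in> c}"

definition lie_group ::
  "'g topology \<Rightarrow> ('g set \<times> ('g \<Rightarrow> 'c::euclidean_space)) set \<Rightarrow>
   ('g \<Rightarrow> 'g \<Rightarrow> 'g) \<Rightarrow> ('g \<Rightarrow> 'g) \<Rightarrow> 'g \<Rightarrow> bool" where
  "lie_group H AH mul ginv e \<longleftrightarrow>
     smooth_manifold H AH \<and> Hausdorff_space H \<and> second_countable H \<and>
     e \<in> topspace H \<and>
     (\<forall>g\<in>topspace H. \<forall>h\<in>topspace H. mul g h \<in> topspace H) \<and>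
     (\<forall>g\<in>topspace H. \<forall>h\<in>topspace H. \<forall>k\<in>topspace H. mul (mul g h) k = mul g (mul h k)) \<and>
     (\<forall>g\<in>topspace H. mul e g = g \<and> mul g e = g) \<and>
     (\<forall>g\<in>topspace H. ginv g \<in> topspace H \<and> mul (ginv g) g = e \<and> mul g (ginv g) = e) \<and>
     smooth_map (prod_topology H H) (prod_atlas AH AH) H AH (\<lambda>(g,h). mul g h) \<and>
     smooth_map H AH H AH ginv"

definition smooth_action ::
  "'g topology \<Rightarrow> ('g set \<times> ('g \<Rightarrow> 'c::euclidean_space)) set \<Rightarrow>
   ('g \<Rightarrow> 'g \<Rightarrow> 'g) \<Rightarrow> 'g \<Rightarrow>
   'a topology \<Rightarrow> ('a set \<times> ('a \<Rightarrow> 'm::euclidean_space)) set \<Rightarrow> ('g \<Rightarrow> 'a \<Rightarrow> 'a) \<Rightarrow> bool" where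
  "smooth_action H AH mul e M AM act \<longleftrightarrow>
     (\<forall>x\<in>topspace M. act e x = x) \<and>
     (\<forall>g\<in>topspace H. \<forall>h\<in>topspace H. \<forall>x\<in>topspace M. act (mul g h) x = act g (act h x)) \<and>
     smooth_map (prod_topology H M) (prod_atlas AH AM) M AM (\<lambda>(g,x). act g x)"

definition action_orbit_rel :: "'g topology \<Rightarrow> 'a topology \<Rightarrow> ('g \<Rightarrow> 'a \<Rightarrow> 'a) \<Rightarrow> ('a \<times> 'a) set" where
  "action_orbit_rel H M act = {(x, act g x) | x g. x \<in> topspace M \<and> g \<in> topspace H}"

end

theory Submission
  imports Defs
begin

text \<open>
  The orbits of G|_U are the G-orbits intersected with U, so the inclusion induces a bijection
  U/G|_U -> pi(U). The content is that the two diffeologies on pi(U) agree. A plot of G_0/G with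
  values in pi(U) lifts near a point r to a plot q of G_0, and some arrow g joins q(r) to a point
  of U. The source map, being a submersion, has a smooth local section through g (by the inverse
  function theorem, whose local inverse is smooth because operator inversion is), so q lifts near
  r to a plot of arrows; following it by the target map gives a plot of U with the same orbits
  as q. For a group action the lift is simply the translate of q by a fixed group element.
\<close>

section \<open>Functions of class C^k\<close>

lemma ck_Suc_has_derivative:
  "ck (Suc k) S f \<Longrightarrow> x \<in> S \<Longrightarrow> (f has_derivative frechet_derivative f (at x)) (at x)"
  by (simp add: frechet_derivative_works)

lemma ck_Suc_derivative: "ck (Suc k) S f \<Longrightarrow> ck k S (\<lambda>x. frechet_derivative f (at x) v)"
  by simp

lemma ck_cong:
  assumes "open S" "\<And>x. x \<in> S \<Longrightarrow> f x = g x" "ck k S f"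
  shows "ck k S g"
  using assms(2,3)
proof (induction k arbitrary: f g)
  case 0
  then show ?case using continuous_on_cong by (metis ck.simps(1))
next
  case (Suc k)
  have g': "(g has_derivative frechet_derivative f (at x)) (at x)" if "x \<in> S" for x
    using has_derivative_transform_within_open[OF ck_Suc_has_derivative[OF Suc.prems(2) that]
        assms(1) that] Suc.prems(1)
    by blast
  have "frechet_derivative g (at x) = frechet_derivative f (at x)" if "x \<in> S" for x
    using g'[OF that] frechet_derivative_at by metis
  then show ?case
    using Suc.prems g' Suc.IH[of "\<lambda>x. frechet_derivative f (at x) v" "\<lambda>x. frechet_derivative g (at x) v" for v]
    by (auto simp: differentiable_def)
qed

lemma ck_SucI:
  assumes "open S" "\<And>x. x \<in> S \<Longrightarrow> (f has_derivative f' x) (at x)" "\<And>v. ck k S (\<lambda>x. f' x v)"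
  shows "ck (Suc k) S f"
proof -
  have "frechet_derivative f (at x) = f' x" if "x \<in> S" for x
    using assms(2)[OF that] frechet_derivative_at by metis
  then show ?thesis
    using assms ck_cong[OF assms(1), of "\<lambda>x. f' x v" "\<lambda>x. frechet_derivative f (at x) v" for v]
    by (auto simp: differentiable_def)
qed

lemma ck_Suc_imp_ck: "ck (Suc k) S f \<Longrightarrow> ck k S f"
proof (induction k arbitrary: f)
  case 0
  then show ?case
    by (auto intro!: continuous_at_imp_continuous_on differentiable_imp_continuous_within)
next
  case (Suc k)
  then show ?case by (metis ck.simps(2))
qed

lemma ck_subset: "ck k S f \<Longrightarrow> T \<subseteq> S \<Longrightarrow> ck k T f"
  by (induction k arbitrary: f) (auto intro: continuous_on_subset)

lemma ck_const: "open S \<Longrightarrow> ck k S (\<lambda>x. c)"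
proof (induction k arbitrary: c)
  case (Suc k)
  show ?case by (rule ck_SucI[where f'="\<lambda>x v. 0"]) (use Suc in auto)
qed simp

lemma ck_id: "open S \<Longrightarrow> ck k S (\<lambda>x. x)"
proof (induction k)
  case (Suc k)
  show ?case by (rule ck_SucI[where f'="\<lambda>x v. v"]) (use Suc ck_const in auto)
qed (simp add: continuous_on_id)

lemma ck_linear:
  assumes "open S" "bounded_linear L" "ck k S f"
  shows "ck k S (\<lambda>x. L (f x))"
  using assms(3)
proof (induction k arbitrary: f)
  case 0
  then show ?case
    using assms(2) by (simp add: linear_continuous_on continuous_on_compose2[of UNIV L])
next
  case (Suc k)
  show ?case
    by (rule ck_SucI[where f'="\<lambda>x v. L (frechet_derivative f (at x) v)"])
       (use Suc assms bounded_linear.has_derivative[OF assms(2) ck_Suc_has_derivative[OF Suc.prems]]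
         in auto)
qed

lemma ck_add:
  assumes "open S" "ck k S f" "ck k S g"
  shows "ck k S (\<lambda>x. f x + g x)"
  using assms(2,3)
proof (induction k arbitrary: f g)
  case 0
  then show ?case by (simp add: continuous_on_add)
next
  case (Suc k)
  show ?case
    by (rule ck_SucI[where f'="\<lambda>x v. frechet_derivative f (at x) v + frechet_derivative g (at x) v"])
       (use Suc assms in \<open>auto intro!: has_derivative_add ck_Suc_has_derivative\<close>)
qed

lemma ck_sum:
  assumes "open S" "finite I" "\<And>i. i \<in> I \<Longrightarrow> ck k S (f i)"
  shows "ck k S (\<lambda>x. \<Sum>i\<in>I. f i x)"
  using assms(2,3)
proof (induction I rule: finite_induct)
  case empty
  then show ?case using ck_const[OF assms(1)] by simp
next
  case (insert i I)
  then show ?case using ck_add[OF assms(1), of k "f i" "\<lambda>x. \<Sum>i\<in>I. f i x"] by simp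
qed

lemma ck_bilinear:
  fixes prod :: "'b::real_normed_vector \<Rightarrow> 'c::real_normed_vector \<Rightarrow> 'd::real_normed_vector"
    and f :: "'a::euclidean_space \<Rightarrow> 'b"
  assumes "open S" "bounded_bilinear prod" "ck k S f" "ck k S g"
  shows "ck k S (\<lambda>x. prod (f x) (g x))"
  using assms(3,4)
proof (induction k arbitrary: f g)
  case 0
  then show ?case using bounded_bilinear.continuous_on[OF assms(2)] by simp
next
  case (Suc k)
  let ?f' = "\<lambda>x. frechet_derivative f (at x)" and ?g' = "\<lambda>x. frechet_derivative g (at x)"
  have "ck k S (\<lambda>x. prod (f x) (?g' x v) + prod (?f' x v) (g x))" for v
    using Suc.prems
    by (intro ck_add[OF assms(1)] Suc.IH) (auto intro: ck_Suc_imp_ck)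
  then show ?case
    by (intro ck_SucI[where f'="\<lambda>x v. prod (f x) (?g' x v) + prod (?f' x v) (g x)"] assms(1)
        bounded_bilinear.FDERIV[OF assms(2)] ck_Suc_has_derivative[OF Suc.prems(1)]
        ck_Suc_has_derivative[OF Suc.prems(2)])
qed

lemma ck_local:
  assumes "open S" "\<And>x. x \<in> S \<Longrightarrow> \<exists>T. open T \<and> x \<in> T \<and> ck k (S \<inter> T) f"
  shows "ck k S f"
  using assms(2)
proof (induction k arbitrary: f)
  case 0
  have "isCont f x" if "x \<in> S" for x
  proof -
    obtain T where T: "open T" "x \<in> T" "ck 0 (S \<inter> T) f" using 0 \<open>x \<in> S\<close> by blast
    have "open (S \<inter> T)" using T assms(1) by blast
    then show ?thesis using continuous_on_eq_continuous_at[of "S \<inter> T" f] T that by simp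
  qed
  then show ?case by (simp add: continuous_at_imp_continuous_on)
next
  case (Suc k)
  have differentiable: "f differentiable at x" if "x \<in> S" for x
  proof -
    obtain T where "open T" "x \<in> T" "ck (Suc k) (S \<inter> T) f" using Suc.prems \<open>x \<in> S\<close> by blast
    then show ?thesis using \<open>x \<in> S\<close> by (simp only: ck.simps) blast
  qed
  have derivative: "ck k S (\<lambda>x. frechet_derivative f (at x) v)" for v
  proof (rule Suc.IH)
    fix x assume "x \<in> S"
    then obtain T where "open T" "x \<in> T" "ck (Suc k) (S \<inter> T) f" using Suc.prems by blast
    then show "\<exists>T. open T \<and> x \<in> T \<and> ck k (S \<inter> T) (\<lambda>x. frechet_derivative f (at x) v)"
      using ck_Suc_derivative by blast
  qed
  show ?case using differentiable derivative by simp
qed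

lemma ck_Blinfun:
  fixes F :: "'a::euclidean_space \<Rightarrow> 'b::euclidean_space \<Rightarrow> 'c::real_normed_vector"
  assumes S: "open S" and lin: "\<And>x. x \<in> S \<Longrightarrow> linear (F x)" and ck: "\<And>v. ck k S (\<lambda>x. F x v)"
  shows "ck k S (\<lambda>x. Blinfun (F x))"
proof (rule ck_cong[OF S])
  \<comment> \<open>a linear map is the sum of the rank-one maps w \<mapsto> (w \<bullet> b) F b over a basis\<close>
  let ?rank1 = "\<lambda>b c. blinfun_scaleR_left c o\<^sub>L blinfun_inner_left b"
  show "ck k S (\<lambda>x. \<Sum>b\<in>Basis. ?rank1 b (F x b))"
    by (intro ck_sum[OF S finite_Basis] ck_linear[OF S _ ck] bounded_linear_compose[OF
          bounded_bilinear.bounded_linear_left[OF bounded_bilinear_blinfun_compose]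
          bounded_linear_blinfun_scaleR_left])
  fix x assume "x \<in> S"
  then have bl: "bounded_linear (F x)" using lin linear_conv_bounded_linear by blast
  show "(\<Sum>b\<in>Basis. ?rank1 b (F x b)) = Blinfun (F x)"
  proof (rule blinfun_eqI)
    fix w
    have "Blinfun (F x) w = F x (\<Sum>b\<in>Basis. (w \<bullet> b) *\<^sub>R b)"
      by (simp add: bounded_linear_Blinfun_apply[OF bl] euclidean_representation)
    also have "\<dots> = (\<Sum>b\<in>Basis. (w \<bullet> b) *\<^sub>R F x b)"
      using bl by (simp add: linear_sum linear_scale bounded_linear.linear o_def)
    finally show "(\<Sum>b\<in>Basis. ?rank1 b (F x b)) w = Blinfun (F x) w"
      by (simp add: blinfun.sum_left)
  qed
qed

lemma ck_compose:
  fixes f :: "'a::euclidean_space \<Rightarrow> 'b::euclidean_space" and g :: "'b \<Rightarrow> 'c::real_normed_vector"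
  assumes "open S" "open T" "f ` S \<subseteq> T" "ck k S f" "ck k T g"
  shows "ck k S (\<lambda>x. g (f x))"
  using assms(3,4,5)
proof (induction k arbitrary: f g)
  case 0
  have "continuous_on S f" "continuous_on T g" "f ` S \<subseteq> T" using 0 by simp_all
  then have "continuous_on S (\<lambda>x. g (f x))" using continuous_on_compose2 by blast
  then show ?case by simp
next
  case (Suc k)
  let ?g' = "\<lambda>y. frechet_derivative g (at y)"
  let ?f' = "\<lambda>x. frechet_derivative f (at x)"
  have lin: "linear (?g' (f x))" if "x \<in> S" for x
    using ck_Suc_has_derivative[OF Suc.prems(3)] Suc.prems(1) that has_derivative_linear by blast
  \<comment> \<open>the chain rule writes the derivative as a bilinear expression in C^k data\<close>
  have "ck k S (\<lambda>x. Blinfun (?g' (f x)))"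
    using Suc.IH[OF Suc.prems(1) ck_Suc_imp_ck[OF Suc.prems(2)] ck_Suc_derivative[OF Suc.prems(3)]]
    by (intro ck_Blinfun[OF assms(1) lin])
  then have app: "ck k S (\<lambda>x. Blinfun (?g' (f x)) (?f' x v))" for v
    by (rule ck_bilinear[OF assms(1) bounded_bilinear_blinfun_apply _ ck_Suc_derivative[OF Suc.prems(2)]])
  have "ck k S (\<lambda>x. ?g' (f x) (?f' x v))" for v
    by (rule ck_cong[OF assms(1) _ app[of v]])
       (metis lin linear_conv_bounded_linear bounded_linear_Blinfun_apply)
  moreover have "((\<lambda>x. g (f x)) has_derivative (\<lambda>v. ?g' (f x) (?f' x v))) (at x)" if "x \<in> S" for x
  proof -
    have "f x \<in> T" using that Suc.prems(1) by blast
    then show ?thesis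
      using diff_chain_at[OF ck_Suc_has_derivative[OF Suc.prems(2) that] ck_Suc_has_derivative[OF Suc.prems(3)]]
      by (simp add: o_def)
  qed
  ultimately show ?case
    by (intro ck_SucI[where f'="\<lambda>x v. ?g' (f x) (?f' x v)"] assms(1))
qed


section \<open>Smoothness of operator inversion\<close>

definition blinfun_inv :: "('b::euclidean_space \<Rightarrow>\<^sub>L 'b) \<Rightarrow> ('b \<Rightarrow>\<^sub>L 'b)" where
  "blinfun_inv L = Blinfun (inv (blinfun_apply L))"

lemma blinfun_compose_assoc: "(a o\<^sub>L b) o\<^sub>L c = a o\<^sub>L (b o\<^sub>L c)"
  by (rule blinfun_eqI) simp

lemma id_blinfun_compose [simp]: "id_blinfun o\<^sub>L a = a"
  and blinfun_compose_id [simp]: "a o\<^sub>L id_blinfun = a"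
  by (auto intro: blinfun_eqI)

lemmas blinfun_compose_distrib =
  bounded_bilinear.add_left[OF bounded_bilinear_blinfun_compose]
  bounded_bilinear.add_right[OF bounded_bilinear_blinfun_compose]
  bounded_bilinear.diff_left[OF bounded_bilinear_blinfun_compose]
  bounded_bilinear.diff_right[OF bounded_bilinear_blinfun_compose]
  bounded_bilinear.minus_left[OF bounded_bilinear_blinfun_compose]
  bounded_bilinear.minus_right[OF bounded_bilinear_blinfun_compose]

lemma blinfun_inv_apply:
  fixes L :: "'b::euclidean_space \<Rightarrow>\<^sub>L 'b"
  assumes "bij (blinfun_apply L)"
  shows "blinfun_apply (blinfun_inv L) = inv (blinfun_apply L)"
  unfolding blinfun_inv_def
  by (rule bounded_linear_Blinfun_apply)
     (rule inj_linear_imp_inv_bounded_linear[OF blinfun.bounded_linear_right bij_is_inj[OF assms]])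

lemma blinfun_inv_compose_left:
  fixes L :: "'b::euclidean_space \<Rightarrow>\<^sub>L 'b"
  assumes "bij (blinfun_apply L)"
  shows "blinfun_inv L o\<^sub>L L = id_blinfun"
  by (rule blinfun_eqI) (simp add: blinfun_inv_apply[OF assms] bij_is_inj[OF assms])

lemma blinfun_inv_compose_right:
  fixes L :: "'b::euclidean_space \<Rightarrow>\<^sub>L 'b"
  assumes "bij (blinfun_apply L)"
  shows "L o\<^sub>L blinfun_inv L = id_blinfun"
  by (rule blinfun_eqI) (simp add: blinfun_inv_apply[OF assms] bij_is_surj[OF assms] surj_f_inv_f)

lemma norm_le_perturbed_blinfun:
  fixes L H :: "'b::euclidean_space \<Rightarrow>\<^sub>L 'b"
  assumes L: "bij (blinfun_apply L)" and c: "norm (blinfun_inv L) + 1 = c"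
    and H: "norm H * (2 * c) < 1"
  shows "norm w \<le> 2 * c * norm ((L + H) w)"
proof -
  have c_pos: "c > 0" using c by (smt (verit) norm_ge_zero)
  have "norm w = norm (blinfun_inv L (L w))"
    using blinfun_inv_compose_left[OF L]
    by (metis blinfun_apply_blinfun_compose blinfun_apply_id_blinfun)
  also have "\<dots> \<le> norm (blinfun_inv L) * norm (L w)" by (rule norm_blinfun)
  also have "\<dots> \<le> c * norm (L w)" using c by (simp add: mult_right_mono)
  finally have w_le: "norm w \<le> c * norm (L w)" .
  have "c * norm (H w) \<le> c * (norm H * norm w)"
    using norm_blinfun[of H w] c_pos by simp
  also have "\<dots> = (norm H * (2 * c)) * norm w / 2" by simp
  also have "\<dots> \<le> norm w / 2" using H c_pos by (intro divide_right_mono mult_left_le_one_le) simp_all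
  finally have Hw: "c * norm (H w) \<le> norm w / 2" .
  have "norm (L w) \<le> norm ((L + H) w) + norm (H w)"
    using norm_triangle_ineq4[of "(L + H) w" "H w"] by (simp add: blinfun.add_left)
  then have "c * norm (L w) \<le> c * norm ((L + H) w) + c * norm (H w)"
    using mult_left_mono c_pos by (fastforce simp: distrib_left)
  then show ?thesis using w_le Hw by linarith
qed

lemma
  fixes L H :: "'b::euclidean_space \<Rightarrow>\<^sub>L 'b"
  assumes L: "bij (blinfun_apply L)" and c: "norm (blinfun_inv L) + 1 = c"
    and H: "norm H * (2 * c) < 1"
  shows bij_perturbed_blinfun: "bij (blinfun_apply (L + H))"
    and norm_blinfun_inv_perturbed: "norm (blinfun_inv (L + H)) \<le> 2 * c"
proof -
  note low = norm_le_perturbed_blinfun[OF assms]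
  have "inj (blinfun_apply (L + H))"
  proof (rule injI)
    fix x y assume "(L + H) x = (L + H) y"
    then have "(L + H) (x - y) = 0" by (simp add: blinfun.diff_right)
    then show "x = y" using low[of "x - y"] by simp
  qed
  then show bij: "bij (blinfun_apply (L + H))"
    using linear_inj_imp_surj[OF bounded_linear.linear[OF blinfun.bounded_linear_right]]
    by (simp add: bij_def)
  show "norm (blinfun_inv (L + H)) \<le> 2 * c"
  proof (rule norm_blinfun_bound)
    show "0 \<le> 2 * c" using c by (smt (verit) norm_ge_zero)
    fix v
    have "(L + H) (blinfun_inv (L + H) v) = v"
      using blinfun_inv_compose_right[OF bij]
      by (metis blinfun_apply_blinfun_compose blinfun_apply_id_blinfun)
    then show "norm (blinfun_inv (L + H) v) \<le> 2 * c * norm v"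
      using low[of "blinfun_inv (L + H) v"] by simp
  qed
qed

lemma blinfun_inv_remainder:
  fixes L H :: "'b::euclidean_space \<Rightarrow>\<^sub>L 'b"
  assumes L: "bij (blinfun_apply L)" and c: "norm (blinfun_inv L) + 1 = c"
    and H: "norm H * (2 * c) < 1"
  shows "norm (blinfun_inv (L + H) - blinfun_inv L - - (blinfun_inv L o\<^sub>L H o\<^sub>L blinfun_inv L))
           \<le> 2 * c ^ 3 * norm H ^ 2"
proof -
  let ?Li = "blinfun_inv L" and ?M = "blinfun_inv (L + H)"
  have bij: "bij (blinfun_apply (L + H))"
    using bij_perturbed_blinfun[OF assms] .
  \<comment> \<open>the resolvent identity, applied twice\<close>
  have resolvent: "?Li - ?M = ?M o\<^sub>L H o\<^sub>L ?Li"
  proof -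
    have "?Li = ?M o\<^sub>L (L + H) o\<^sub>L ?Li"
      using blinfun_inv_compose_left[OF bij] by simp
    also have "\<dots> = (?M o\<^sub>L L o\<^sub>L ?Li) + (?M o\<^sub>L H o\<^sub>L ?Li)"
      by (simp add: blinfun_compose_distrib)
    also have "?M o\<^sub>L L o\<^sub>L ?Li = ?M"
      using blinfun_inv_compose_right[OF L] by (simp add: blinfun_compose_assoc)
    finally have "?Li = ?M + (?M o\<^sub>L H o\<^sub>L ?Li)" .
    then show ?thesis by (metis add_diff_cancel_left')
  qed
  have "?M - ?Li - - (?Li o\<^sub>L H o\<^sub>L ?Li) = (?Li - ?M) o\<^sub>L H o\<^sub>L ?Li"
    using resolvent by (simp add: blinfun_compose_distrib algebra_simps)
  also have "\<dots> = ?M o\<^sub>L H o\<^sub>L ?Li o\<^sub>L H o\<^sub>L ?Li"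
    using resolvent by simp
  finally have eq: "?M - ?Li - - (?Li o\<^sub>L H o\<^sub>L ?Li) = ?M o\<^sub>L H o\<^sub>L ?Li o\<^sub>L H o\<^sub>L ?Li" .
  have c_pos: "c > 0" using c by (smt (verit) norm_ge_zero)
  have "norm (?M o\<^sub>L H o\<^sub>L ?Li o\<^sub>L H o\<^sub>L ?Li) \<le> norm ?M * norm H * norm ?Li * norm H * norm ?Li"
    by (smt (verit) mult_right_mono norm_blinfun_compose norm_ge_zero)
  also have "\<dots> \<le> (2 * c) * norm H * c * norm H * c"
    using norm_blinfun_inv_perturbed[OF assms] c c_pos by (intro mult_mono) auto
  also have "\<dots> = 2 * c ^ 3 * norm H ^ 2" by (simp add: power2_eq_square power3_eq_cube)
  finally show ?thesis using eq by simp
qed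

lemma has_derivative_blinfun_inv:
  fixes L :: "'b::euclidean_space \<Rightarrow>\<^sub>L 'b"
  assumes L: "bij (blinfun_apply L)"
  shows "(blinfun_inv has_derivative (\<lambda>H. - (blinfun_inv L o\<^sub>L H o\<^sub>L blinfun_inv L))) (at L)"
  unfolding has_derivative_at_alt
proof (intro conjI allI impI)
  let ?Li = "blinfun_inv L"
  define c where "c = norm ?Li + 1"
  have c_pos: "c > 0" unfolding c_def by (smt (verit) norm_ge_zero)
  show "bounded_linear (\<lambda>H. - (?Li o\<^sub>L H o\<^sub>L ?Li))"
    by (intro bounded_linear_minus bounded_linear_compose[OF
          bounded_bilinear.bounded_linear_left[OF bounded_bilinear_blinfun_compose]
          bounded_bilinear.bounded_linear_right[OF bounded_bilinear_blinfun_compose]])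
  fix e :: real assume "e > 0"
  show "\<exists>d>0. \<forall>y. norm (y - L) < d \<longrightarrow>
          norm (blinfun_inv y - ?Li - - (?Li o\<^sub>L (y - L) o\<^sub>L ?Li)) \<le> e * norm (y - L)"
  proof (intro exI[of _ "min (1 / (2 * c)) (e / (2 * c ^ 3))"] conjI allI impI)
    show "0 < min (1 / (2 * c)) (e / (2 * c ^ 3))" using c_pos \<open>e > 0\<close> by simp
    fix y assume y: "norm (y - L) < min (1 / (2 * c)) (e / (2 * c ^ 3))"
    define H where "H = y - L"
    have small: "norm H * (2 * c) < 1" and tiny: "norm H * (2 * c ^ 3) \<le> e"
      using y c_pos by (auto simp: H_def field_simps)
    have "norm (blinfun_inv (L + H) - ?Li - - (?Li o\<^sub>L H o\<^sub>L ?Li)) \<le> 2 * c ^ 3 * norm H ^ 2"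
      using blinfun_inv_remainder[OF L c_def[symmetric] small] .
    also have "\<dots> = (norm H * (2 * c ^ 3)) * norm H" by (simp add: power2_eq_square)
    also have "\<dots> \<le> e * norm H" using tiny by (intro mult_right_mono) auto
    finally show "norm (blinfun_inv y - ?Li - - (?Li o\<^sub>L (y - L) o\<^sub>L ?Li)) \<le> e * norm (y - L)"
      by (simp add: H_def)
  qed
qed

lemma ck_blinfun_inv:
  fixes M :: "'a::euclidean_space \<Rightarrow> ('b::euclidean_space \<Rightarrow>\<^sub>L 'b)"
  assumes S: "open S" and bij: "\<And>x. x \<in> S \<Longrightarrow> bij (blinfun_apply (M x))" and "ck k S M"
  shows "ck k S (\<lambda>x. blinfun_inv (M x))"
  using assms(3)
proof (induction k)
  case 0
  have "isCont (\<lambda>x. blinfun_inv (M x)) x" if "x \<in> S" for x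
  proof -
    have "isCont M x" using 0 S that continuous_on_eq_continuous_at by auto
    moreover have "isCont blinfun_inv (M x)"
      using has_derivative_continuous[OF has_derivative_blinfun_inv[OF bij[OF that]]] .
    ultimately show ?thesis using continuous_at_compose[of x M blinfun_inv] by (simp add: o_def)
  qed
  then show ?case by (simp add: continuous_at_imp_continuous_on)
next
  case (Suc k)
  let ?D = "\<lambda>x. frechet_derivative M (at x)"
  have ih: "ck k S (\<lambda>x. blinfun_inv (M x))" using Suc.IH[OF ck_Suc_imp_ck[OF Suc.prems]] .
  have "ck k S (\<lambda>x. - (blinfun_inv (M x) o\<^sub>L ?D x v o\<^sub>L blinfun_inv (M x)))" for v
    by (intro ck_linear[OF S bounded_linear_minus[OF bounded_linear_ident]]
        ck_bilinear[OF S bounded_bilinear_blinfun_compose] ih ck_Suc_derivative[OF Suc.prems])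
  moreover have "((\<lambda>x. blinfun_inv (M x)) has_derivative
      (\<lambda>v. - (blinfun_inv (M x) o\<^sub>L ?D x v o\<^sub>L blinfun_inv (M x)))) (at x)" if "x \<in> S" for x
    using diff_chain_at[OF ck_Suc_has_derivative[OF Suc.prems that]
        has_derivative_blinfun_inv[OF bij[OF that]]]
    by (simp add: o_def)
  ultimately show ?case by (intro ck_SucI[OF S])
qed


lemma smooth_on_subset:
  assumes "smooth_on S f" "T \<subseteq> S"
  shows "smooth_on T f"
  using assms unfolding smooth_on_def by (blast intro: ck_subset)

lemma smooth_on_cong:
  assumes "open S" "\<And>x. x \<in> S \<Longrightarrow> f x = g x" "smooth_on S f"
  shows "smooth_on S g"
  using assms(3) ck_cong[OF assms(1,2)] by (simp add: smooth_on_def)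

lemma smooth_on_const: "open S \<Longrightarrow> smooth_on S (\<lambda>x. c)"
  by (simp add: smooth_on_def ck_const)

lemma smooth_on_empty: "smooth_on {} f"
  by (rule smooth_on_cong[OF open_empty _ smooth_on_const[OF open_empty]]) simp

lemma smooth_on_id: "open S \<Longrightarrow> smooth_on S (\<lambda>x. x)"
  by (simp add: smooth_on_def ck_id)

lemma smooth_on_linear:
  "open S \<Longrightarrow> bounded_linear L \<Longrightarrow> smooth_on S f \<Longrightarrow> smooth_on S (\<lambda>x. L (f x))"
  by (simp add: smooth_on_def ck_linear)

lemma smooth_on_add:
  "open S \<Longrightarrow> smooth_on S f \<Longrightarrow> smooth_on S g \<Longrightarrow> smooth_on S (\<lambda>x. f x + g x)"
  by (simp add: smooth_on_def ck_add)

lemma smooth_on_compose: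
  fixes f :: "'a::euclidean_space \<Rightarrow> 'b::euclidean_space" and g :: "'b \<Rightarrow> 'c::real_normed_vector"
  shows "open S \<Longrightarrow> open T \<Longrightarrow> f ` S \<subseteq> T \<Longrightarrow> smooth_on S f \<Longrightarrow> smooth_on T g \<Longrightarrow>
    smooth_on S (\<lambda>x. g (f x))"
  by (simp add: smooth_on_def ck_compose)

lemma smooth_on_local:
  assumes "open S" "\<And>x. x \<in> S \<Longrightarrow> \<exists>T. open T \<and> x \<in> T \<and> smooth_on (S \<inter> T) f"
  shows "smooth_on S f"
  unfolding smooth_on_def
proof
  fix k
  have "\<exists>T. open T \<and> x \<in> T \<and> ck k (S \<inter> T) f" if "x \<in> S" for x
    using assms(2)[OF that] unfolding smooth_on_def by blast
  then show "ck k S f" by (rule ck_local[OF assms(1)])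
qed

lemma smooth_on_imp_continuous_on: "smooth_on S f \<Longrightarrow> continuous_on S f"
  unfolding smooth_on_def by (drule spec[of _ 0]) simp

lemma smooth_on_has_derivative:
  "smooth_on S f \<Longrightarrow> x \<in> S \<Longrightarrow> (f has_derivative frechet_derivative f (at x)) (at x)"
  unfolding smooth_on_def by (drule spec[of _ "Suc 0"]) (rule ck_Suc_has_derivative)

lemma smooth_on_Pair:
  fixes f :: "'a::euclidean_space \<Rightarrow> 'b::real_normed_vector" and g :: "'a \<Rightarrow> 'c::real_normed_vector"
  assumes "open S" "smooth_on S f" "smooth_on S g"
  shows "smooth_on S (\<lambda>x. (f x, g x))"
proof -
  have "bounded_linear (\<lambda>y::'b. (y, 0::'c))" "bounded_linear (\<lambda>z::'c. (0::'b, z))"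
    by (auto intro: bounded_linear_Pair bounded_linear_ident bounded_linear_zero)
  then have "smooth_on S (\<lambda>x. (f x, 0::'c) + (0::'b, g x))"
    using smooth_on_linear[OF assms(1) _ assms(2)] smooth_on_linear[OF assms(1) _ assms(3)]
    by (intro smooth_on_add assms(1)) auto
  then show ?thesis by simp
qed

lemma
  fixes K :: "'a::euclidean_space \<Rightarrow> 'b::euclidean_space"
  assumes K: "bounded_linear K"
  shows smooth_on_affine: "open S \<Longrightarrow> smooth_on S (\<lambda>y. a + K (y - b))"
    and has_derivative_affine: "((\<lambda>y. a + K (y - b)) has_derivative K) (at y)"
proof -
  show "open S \<Longrightarrow> smooth_on S (\<lambda>y. a + K (y - b))"
    unfolding diff_conv_add_uminus
    by (intro smooth_on_add smooth_on_const smooth_on_linear[OF _ K] smooth_on_id)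
  have "((\<lambda>y. y - b) has_derivative (\<lambda>h. h)) (at y)"
    by (intro derivative_eq_intros) auto
  then have "((\<lambda>y. K (y - b)) has_derivative K) (at y)"
    by (rule bounded_linear.has_derivative[OF K])
  then show "((\<lambda>y. a + K (y - b)) has_derivative K) (at y)"
    using has_derivative_add[OF has_derivative_const] by fastforce
qed

lemma smooth_inverse_function_theorem:
  fixes h :: "'b::euclidean_space \<Rightarrow> 'b"
  assumes O: "open \<Omega>" and h: "smooth_on \<Omega> h" and y0: "y0 \<in> \<Omega>"
    and id: "frechet_derivative h (at y0) = id"
  obtains U V g where "open U" "U \<subseteq> \<Omega>" "y0 \<in> U" "open V" "h y0 \<in> V"
    "homeomorphism U V h g" "smooth_on V g"
proof -
  define h' where "h' x = Blinfun (frechet_derivative h (at x))" for x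
  have lin: "linear (frechet_derivative h (at x))" if "x \<in> \<Omega>" for x
    using smooth_on_has_derivative[OF h that] has_derivative_linear by blast
  have h'_apply: "blinfun_apply (h' x) = frechet_derivative h (at x)" if "x \<in> \<Omega>" for x
    unfolding h'_def using lin[OF that] linear_conv_bounded_linear bounded_linear_Blinfun_apply by blast
  have ck_h': "ck k \<Omega> h'" for k
    unfolding h'_def using h by (intro ck_Blinfun[OF O lin]) (auto simp: smooth_on_def ck_Suc_derivative)
  have h': "(h has_derivative blinfun_apply (h' x)) (at x)" if "x \<in> \<Omega>" for x
    using smooth_on_has_derivative[OF h that] h'_apply[OF that] by simp
  have "id_blinfun o\<^sub>L h' y0 = id_blinfun"
    by (rule blinfun_eqI) (simp add: h'_apply[OF y0] id)
  then obtain U V g g' where U: "open U" "U \<subseteq> \<Omega>" "y0 \<in> U" and V: "open V" "h y0 \<in> V"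
    and hom: "homeomorphism U V h g"
    and g': "\<And>y. y \<in> V \<Longrightarrow> (g has_derivative (g' y)) (at y)"
    and g'_eq: "\<And>y. y \<in> V \<Longrightarrow> g' y = inv (blinfun_apply (h' (g y)))"
    and bij: "\<And>y. y \<in> V \<Longrightarrow> bij (blinfun_apply (h' (g y)))"
    using inverse_function_theorem[OF O h' _ y0] ck_h'[of 0] by (metis ck.simps(1))
  have gV: "g ` V \<subseteq> \<Omega>" using hom U(2) by (simp add: homeomorphism_def)
  \<comment> \<open>bootstrap: g' = inv o h' o g, so g of class C^k makes g' of class C^k\<close>
  have "ck k V g" for k
  proof (induction k)
    case 0
    then show ?case using hom by (simp add: homeomorphism_def)
  next
    case (Suc k)
    have "ck k V (\<lambda>y. blinfun_inv (h' (g y)))"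
      by (rule ck_blinfun_inv[OF V(1) bij ck_compose[OF V(1) O gV Suc.IH ck_h']])
    then have "ck k V (\<lambda>y. blinfun_inv (h' (g y)) v)" for v
      by (rule ck_bilinear[OF V(1) bounded_bilinear_blinfun_apply _ ck_const[OF V(1)]])
    moreover have "(g has_derivative blinfun_inv (h' (g y))) (at y)" if "y \<in> V" for y
      using g'[OF that] g'_eq[OF that] blinfun_inv_apply[OF bij[OF that]] by simp
    ultimately show ?case by (intro ck_SucI[OF V(1)])
  qed
  then show ?thesis by (intro that[OF U V hom]) (simp add: smooth_on_def)
qed

lemma smooth_local_right_inverse:
  fixes F :: "'c::euclidean_space \<Rightarrow> 'b::euclidean_space"
  assumes O: "open \<Omega>" and F: "smooth_on \<Omega> F" and a: "a \<in> \<Omega>"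
    and surj: "range (frechet_derivative F (at a)) = UNIV"
  obtains V \<tau> where "open V" "F a \<in> V" "smooth_on V \<tau>" "\<tau> ` V \<subseteq> \<Omega>"
    "\<And>z. z \<in> V \<Longrightarrow> F (\<tau> z) = z" "\<tau> (F a) = a"
proof -
  define L where "L = frechet_derivative F (at a)"
  have dF: "(F has_derivative L) (at a)"
    unfolding L_def using smooth_on_has_derivative[OF F a] .
  obtain K where "linear K" and LK: "L \<circ> K = id"
    using linear_surjective_right_inverse[OF has_derivative_linear[OF dF]] surj
    unfolding L_def by blast
  then have K: "bounded_linear K" using linear_conv_bounded_linear by blast
  \<comment> \<open>an affine right inverse of the derivative reduces to the inverse function theorem\<close>
  define A where "A = (\<lambda>y. a + K (y - F a))"
  define \<Omega>' where "\<Omega>' = A -` \<Omega>"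
  have A_smooth: "smooth_on S A" if "open S" for S
    unfolding A_def using smooth_on_affine[OF K that] .
  have O': "open \<Omega>'"
    unfolding \<Omega>'_def
    using continuous_on_open_vimage[OF open_UNIV, of A]
      smooth_on_imp_continuous_on[OF A_smooth[OF open_UNIV]] O
    by (simp add: vimage_def)
  have A_Fa: "A (F a) = a" unfolding A_def using linear_0[OF \<open>linear K\<close>] by simp
  have Fa: "F a \<in> \<Omega>'" unfolding \<Omega>'_def using A_Fa a by simp
  have FA_smooth: "smooth_on \<Omega>' (\<lambda>y. F (A y))"
    by (rule smooth_on_compose[OF O' O _ A_smooth[OF O'] F]) (auto simp: \<Omega>'_def)
  have "(A has_derivative K) (at (F a))"
    unfolding A_def by (rule has_derivative_affine[OF K])
  then have "((\<lambda>y. F (A y)) has_derivative (L \<circ> K)) (at (F a))"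
    using diff_chain_at[of A K "F a" F L] dF A_Fa by (simp add: o_def)
  then have "frechet_derivative (\<lambda>y. F (A y)) (at (F a)) = id"
    unfolding LK[symmetric] by (rule frechet_derivative_at[symmetric])
  then obtain U V g where U: "open U" "U \<subseteq> \<Omega>'" "F a \<in> U" and V: "open V" "F (A (F a)) \<in> V"
    and hom: "homeomorphism U V (\<lambda>y. F (A y)) g" and g: "smooth_on V g"
    by (rule smooth_inverse_function_theorem[OF O' FA_smooth Fa])
  have gV: "g ` V \<subseteq> \<Omega>'" using homeomorphism_image2[OF hom] U(2) by simp
  have "g (F a) = F a" using homeomorphism_apply1[OF hom U(3)] A_Fa by simp
  show ?thesis
  proof (rule that[of V "\<lambda>z. A (g z)"])
    show "smooth_on V (\<lambda>z. A (g z))"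
      by (rule smooth_on_compose[OF V(1) O' gV g A_smooth[OF O']])
    show "(\<lambda>z. A (g z)) ` V \<subseteq> \<Omega>" using gV by (auto simp: \<Omega>'_def)
    show "F (A (g z)) = z" if "z \<in> V" for z
      using homeomorphism_apply2[OF hom that] .
    show "A (g (F a)) = a" using \<open>g (F a) = F a\<close> A_Fa by simp
    show "open V" by (rule V(1))
    show "F a \<in> V" using V(2) A_Fa by simp
  qed
qed


definition topological_atlas :: "'a topology \<Rightarrow> ('a set \<times> ('a \<Rightarrow> 'm::euclidean_space)) set \<Rightarrow> bool" where
  "topological_atlas X A \<longleftrightarrow>
     (\<forall>(W,\<phi>)\<in>A. openin X W \<and> open (\<phi> ` W) \<and>
                 homeomorphic_map (subtopology X W) (top_of_set (\<phi> ` W)) \<phi>) \<and>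
     (\<forall>x\<in>topspace X. \<exists>(W,\<phi>)\<in>A. x \<in> W)"

lemma smooth_manifold_imp_topological_atlas: "smooth_manifold X A \<Longrightarrow> topological_atlas X A"
  unfolding smooth_manifold_def topological_atlas_def by blast

lemma
  assumes "topological_atlas X A" "(W,\<phi>) \<in> A"
  shows openin_chart_domain: "openin X W"
    and open_chart_image: "open (\<phi> ` W)"
    and homeomorphic_map_chart: "homeomorphic_map (subtopology X W) (top_of_set (\<phi> ` W)) \<phi>"
  using assms unfolding topological_atlas_def by auto

lemma topological_atlas_cover:
  assumes "topological_atlas X A" "x \<in> topspace X"
  obtains W \<phi> where "(W,\<phi>) \<in> A" "x \<in> W"
  using assms unfolding topological_atlas_def by blast

lemma inj_on_chart:
  assumes "topological_atlas X A" "(W,\<phi>) \<in> A"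
  shows "inj_on \<phi> W"
proof -
  have "W \<subseteq> topspace X" using openin_chart_domain[OF assms] openin_subset by blast
  then show ?thesis
    using homeomorphic_imp_injective_map[OF homeomorphic_map_chart[OF assms]] by (simp add: Int_absorb1)
qed

lemma inv_into_chart:
  assumes "topological_atlas X A" "(W,\<phi>) \<in> A" "x \<in> W"
  shows "inv_into W \<phi> (\<phi> x) = x"
  using inj_on_chart[OF assms(1,2)] assms(3) by (rule inv_into_f_f)

lemma open_chart_image_Int:
  assumes "topological_atlas X A" "(W,\<phi>) \<in> A" "openin X Z"
  shows "open (\<phi> ` (W \<inter> Z))"
proof -
  have "W \<subseteq> topspace X" using openin_chart_domain[OF assms(1,2)] openin_subset by blast
  then have "W \<inter> Z \<subseteq> topspace (subtopology X W)" by auto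
  moreover have "openin (subtopology X W) (W \<inter> Z)"
    using assms(3) by (auto simp: openin_subtopology)
  ultimately have "openin (top_of_set (\<phi> ` W)) (\<phi> ` (W \<inter> Z))"
    using homeomorphic_map_openness[OF homeomorphic_map_chart[OF assms(1,2)]] by blast
  then show ?thesis using openin_open_trans open_chart_image[OF assms(1,2)] by blast
qed

lemma continuous_map_chart:
  assumes "topological_atlas X A" "(W,\<phi>) \<in> A"
  shows "continuous_map (subtopology X W) euclidean \<phi>"
  using homeomorphic_imp_continuous_map[OF homeomorphic_map_chart[OF assms]]
  by (simp add: continuous_map_in_subtopology)

lemma continuous_map_chart_inv:
  assumes "topological_atlas X A" "(W,\<phi>) \<in> A"
  shows "continuous_map (top_of_set (\<phi> ` W)) X (inv_into W \<phi>)"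
proof -
  have W: "W \<subseteq> topspace X" using openin_chart_domain[OF assms] openin_subset by blast
  obtain \<phi>' where \<phi>': "homeomorphic_maps (subtopology X W) (top_of_set (\<phi> ` W)) \<phi> \<phi>'"
    using homeomorphic_map_chart[OF assms] homeomorphic_map_maps by blast
  have "\<phi>' y = inv_into W \<phi> y" if y: "y \<in> \<phi> ` W" for y
  proof -
    obtain x where "x \<in> W" "y = \<phi> x" using y by blast
    moreover have "\<phi>' (\<phi> x) = x" if "x \<in> W" for x
      using \<phi>' W that unfolding homeomorphic_maps_def by auto
    ultimately show ?thesis using inv_into_chart[OF assms] by simp
  qed
  moreover have "continuous_map (top_of_set (\<phi> ` W)) (subtopology X W) \<phi>'"
    using \<phi>' unfolding homeomorphic_maps_def by blast
  ultimately have "continuous_map (top_of_set (\<phi> ` W)) (subtopology X W) (inv_into W \<phi>)"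
    by (metis continuous_map_eq topspace_euclidean_subtopology)
  then show ?thesis using continuous_map_in_subtopology by blast
qed

lemma open_vimage_continuous_map:
  assumes "continuous_map (top_of_set D) Y f" "openin Y V" "open D"
  shows "open (D \<inter> f -` V)"
proof -
  have "openin (top_of_set D) {x \<in> topspace (top_of_set D). f x \<in> V}"
    using openin_continuous_map_preimage[OF assms(1,2)] .
  then have "openin (top_of_set D) (D \<inter> f -` V)" by (simp add: vimage_def Int_def)
  then show ?thesis using openin_open_trans assms(3) by blast
qed

lemma mplot_subset:
  assumes "mplot X A D p" "open D'" "D' \<subseteq> D"
  shows "mplot X A D' p"
proof -
  have "continuous_map (subtopology (top_of_set D) D') X p"
    using assms(1) continuous_map_from_subtopology unfolding mplot_def by blast
  then have "continuous_map (top_of_set D') X p"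
    using assms(3) by (simp add: subtopology_subtopology Int_absorb1)
  then show ?thesis
    using assms unfolding mplot_def by (auto intro: smooth_on_subset)
qed

lemma mplot_compose:
  assumes X: "topological_atlas X A" and Y: "topological_atlas Y B"
    and p: "mplot X A D p" "p ` D \<subseteq> S" and F: "smooth_map_on X A Y B S F"
  shows "mplot Y B D (\<lambda>r. F (p r))"
proof -
  have D: "open D" and pX: "p ` D \<subseteq> topspace X" and cp: "continuous_map (top_of_set D) X p"
    and sp: "\<And>W \<phi>. (W,\<phi>) \<in> A \<Longrightarrow> smooth_on (D \<inter> p -` W) (\<phi> \<circ> p)"
    using p(1) unfolding mplot_def by auto
  have S: "openin X S" and FY: "F ` S \<subseteq> topspace Y" and cF: "continuous_map (subtopology X S) Y F"
    and sF: "\<And>W \<phi> V \<psi>. (W,\<phi>) \<in> A \<Longrightarrow> (V,\<psi>) \<in> B \<Longrightarrow>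
              smooth_on (\<phi> ` (W \<inter> S \<inter> F -` V)) (\<psi> \<circ> F \<circ> inv_into W \<phi>)"
    using F unfolding smooth_map_on_def by auto
  have cFp: "continuous_map (top_of_set D) Y (\<lambda>r. F (p r))"
    using continuous_map_compose[OF continuous_map_into_subtopology[OF cp] cF] p(2)
    by (auto simp: o_def)
  have "smooth_on (D \<inter> (\<lambda>r. F (p r)) -` V) (\<psi> \<circ> (\<lambda>r. F (p r)))" if V\<psi>: "(V,\<psi>) \<in> B" for V \<psi>
  proof (rule smooth_on_local[OF open_vimage_continuous_map[OF cFp openin_chart_domain[OF Y V\<psi>] D]])
    fix r assume r: "r \<in> D \<inter> (\<lambda>r. F (p r)) -` V"
    then have "p r \<in> topspace X" using pX by blast
    then obtain W \<phi> where W\<phi>: "(W,\<phi>) \<in> A" "p r \<in> W"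
      by (rule topological_atlas_cover[OF X])
    \<comment> \<open>near r the composite factors through the chart expressions of p and of F\<close>
    define Z where "Z = W \<inter> {x \<in> S. F x \<in> V}"
    have "topspace (subtopology X S) = S" using S openin_subset by auto
    then have "openin (subtopology X S) {x \<in> S. F x \<in> V}"
      using openin_continuous_map_preimage[OF cF openin_chart_domain[OF Y V\<psi>]] by simp
    then have Z: "openin X Z"
      unfolding Z_def using openin_trans_full[OF _ S] openin_chart_domain[OF X W\<phi>(1)] by blast
    define T where "T = D \<inter> p -` Z"
    have T: "open T" unfolding T_def using open_vimage_continuous_map[OF cp Z D] .
    have "W \<inter> S \<inter> F -` V = Z" by (auto simp: Z_def)
    then have sFZ: "smooth_on (\<phi> ` Z) (\<psi> \<circ> F \<circ> inv_into W \<phi>)" using sF[OF W\<phi>(1) V\<psi>] by simp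
    have openZ: "open (\<phi> ` Z)"
      using open_chart_image_Int[OF X W\<phi>(1) Z] unfolding Z_def by (simp add: Int_absorb)
    have spT: "smooth_on T (\<phi> \<circ> p)"
      by (rule smooth_on_subset[OF sp[OF W\<phi>(1)]]) (auto simp: T_def Z_def)
    have "(\<phi> \<circ> p) ` T \<subseteq> \<phi> ` Z" by (auto simp: T_def)
    from smooth_on_compose[OF T openZ this spT sFZ]
    have "smooth_on T (\<lambda>r. (\<psi> \<circ> F \<circ> inv_into W \<phi>) ((\<phi> \<circ> p) r))" .
    then have "smooth_on T (\<psi> \<circ> (\<lambda>r. F (p r)))"
      by (rule smooth_on_cong[OF T, rotated]) (simp add: T_def Z_def inv_into_chart[OF X W\<phi>(1)])
    moreover have "r \<in> T" "T \<subseteq> D \<inter> (\<lambda>r. F (p r)) -` V"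
      using r W\<phi>(2) p(2) by (auto simp: T_def Z_def)
    ultimately show "\<exists>T. open T \<and> r \<in> T \<and> smooth_on (D \<inter> (\<lambda>r. F (p r)) -` V \<inter> T) (\<psi> \<circ> (\<lambda>r. F (p r)))"
      using T by (metis Int_absorb1)
  qed
  moreover have "(\<lambda>r. F (p r)) ` D \<subseteq> topspace Y" using p(2) FY by blast
  ultimately show ?thesis
    unfolding mplot_def using D cFp by auto
qed

lemma mplot_chart_inv:
  assumes X: "smooth_manifold X A" and W\<kappa>: "(W,\<kappa>) \<in> A"
    and D: "open D" and p: "smooth_on D p" "p ` D \<subseteq> \<kappa> ` W"
  shows "mplot X A D (\<lambda>r. inv_into W \<kappa> (p r))"
proof -
  have atlas: "topological_atlas X A" using smooth_manifold_imp_topological_atlas[OF X] .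
  have "continuous_map (top_of_set D) (top_of_set (\<kappa> ` W)) p"
    using smooth_on_imp_continuous_on[OF p(1)] p(2) by (auto intro: continuous_map_into_subtopology)
  from continuous_map_compose[OF this continuous_map_chart_inv[OF atlas W\<kappa>]]
  have cont: "continuous_map (top_of_set D) X (\<lambda>r. inv_into W \<kappa> (p r))"
    by (simp add: o_def)
  have inW: "inv_into W \<kappa> (p r) \<in> W" if "r \<in> D" for r
    using p(2) that by (meson image_subset_iff inv_into_into)
  have "smooth_on (D \<inter> (\<lambda>r. inv_into W \<kappa> (p r)) -` W') (\<psi> \<circ> (\<lambda>r. inv_into W \<kappa> (p r)))"
    if W'\<psi>: "(W',\<psi>) \<in> A" for W' \<psi>
  proof -
    let ?D' = "D \<inter> (\<lambda>r. inv_into W \<kappa> (p r)) -` W'"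
    have D': "open ?D'"
      using open_vimage_continuous_map[OF cont openin_chart_domain[OF atlas W'\<psi>] D] .
    have "p ` ?D' \<subseteq> \<kappa> ` (W \<inter> W')"
    proof
      fix z assume "z \<in> p ` ?D'"
      then obtain r where r: "r \<in> ?D'" and z: "z = p r" by blast
      then have "p r \<in> \<kappa> ` W" using p(2) by blast
      then have "z = \<kappa> (inv_into W \<kappa> (p r))" unfolding z by (rule f_inv_into_f[symmetric])
      moreover have "inv_into W \<kappa> (p r) \<in> W \<inter> W'" using inW r by blast
      ultimately show "z \<in> \<kappa> ` (W \<inter> W')" by blast
    qed
    moreover have "smooth_on (\<kappa> ` (W \<inter> W')) (\<psi> \<circ> inv_into W \<kappa>)"
      using X W\<kappa> W'\<psi> unfolding smooth_manifold_def by blast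
    ultimately show ?thesis
      using smooth_on_compose[OF D' open_chart_image_Int[OF atlas W\<kappa> openin_chart_domain[OF atlas W'\<psi>]]
          _ smooth_on_subset[OF p(1)]]
      by (simp add: o_def)
  qed
  then show ?thesis
    unfolding mplot_def using D cont inW openin_chart_domain[OF atlas W\<kappa>] openin_subset by fastforce
qed


section \<open>Local sections of submersions\<close>

lemma submersion_chart_section:
  assumes G: "smooth_manifold G AG" and G0: "smooth_manifold G0 A0"
    and s: "submersion G AG G0 A0 s" and g: "g \<in> topspace G"
  obtains Wg \<kappa> W0 \<phi>0 V \<tau> where "(Wg,\<kappa>) \<in> AG" "g \<in> Wg" "(W0,\<phi>0) \<in> A0" "s g \<in> W0"
    "open V" "\<phi>0 (s g) \<in> V" "smooth_on V \<tau>" "\<tau> ` V \<subseteq> \<kappa> ` (Wg \<inter> topspace G \<inter> s -` W0)"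
    "\<And>z. z \<in> V \<Longrightarrow> \<phi>0 (s (inv_into Wg \<kappa> (\<tau> z))) = z" "\<tau> (\<phi>0 (s g)) = \<kappa> g"
proof -
  have atlas: "topological_atlas G AG" "topological_atlas G0 A0"
    using G G0 smooth_manifold_imp_topological_atlas by auto
  have s_G0: "s ` topspace G \<subseteq> topspace G0" and cont: "continuous_map G G0 s"
    and smooth: "\<And>W \<phi> V \<psi>. (W,\<phi>) \<in> AG \<Longrightarrow> (V,\<psi>) \<in> A0 \<Longrightarrow>
              smooth_on (\<phi> ` (W \<inter> topspace G \<inter> s -` V)) (\<psi> \<circ> s \<circ> inv_into W \<phi>)"
    using s unfolding submersion_def smooth_map_def smooth_map_on_def by auto
  obtain Wg \<kappa> where Wg: "(Wg,\<kappa>) \<in> AG" "g \<in> Wg"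
    using topological_atlas_cover[OF atlas(1) g] by blast
  have "s g \<in> topspace G0" using s_G0 g by blast
  then obtain W0 \<phi>0 where W0: "(W0,\<phi>0) \<in> A0" "s g \<in> W0"
    using topological_atlas_cover[OF atlas(2)] by blast
  have \<kappa>_g: "inv_into Wg \<kappa> (\<kappa> g) = g" using inv_into_chart[OF atlas(1) Wg] .
  define \<Omega> where "\<Omega> = \<kappa> ` (Wg \<inter> topspace G \<inter> s -` W0)"
  have "openin G {x \<in> topspace G. s x \<in> W0}"
    using openin_continuous_map_preimage[OF cont openin_chart_domain[OF atlas(2) W0(1)]] .
  moreover have "Wg \<inter> topspace G \<inter> s -` W0 = Wg \<inter> {x \<in> topspace G. s x \<in> W0}" by auto
  ultimately have "open \<Omega>" unfolding \<Omega>_def using open_chart_image_Int[OF atlas(1) Wg(1)] by metis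
  moreover have "smooth_on \<Omega> (\<phi>0 \<circ> s \<circ> inv_into Wg \<kappa>)"
    unfolding \<Omega>_def using smooth[OF Wg(1) W0(1)] .
  moreover have "\<kappa> g \<in> \<Omega>" unfolding \<Omega>_def using Wg(2) g W0(2) by blast
  moreover have "range (frechet_derivative (\<phi>0 \<circ> s \<circ> inv_into Wg \<kappa>) (at (\<kappa> g))) = UNIV"
    using s g Wg W0 \<kappa>_g unfolding submersion_def by fastforce
  ultimately obtain V \<tau> where "open V" "(\<phi>0 \<circ> s \<circ> inv_into Wg \<kappa>) (\<kappa> g) \<in> V" "smooth_on V \<tau>"
    "\<tau> ` V \<subseteq> \<Omega>" "\<And>z. z \<in> V \<Longrightarrow> (\<phi>0 \<circ> s \<circ> inv_into Wg \<kappa>) (\<tau> z) = z"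
    "\<tau> ((\<phi>0 \<circ> s \<circ> inv_into Wg \<kappa>) (\<kappa> g)) = \<kappa> g"
    by (rule smooth_local_right_inverse) blast
  then show ?thesis
    using that[OF Wg W0] \<kappa>_g unfolding \<Omega>_def by simp
qed

lemma submersion_local_section:
  assumes G: "smooth_manifold G AG" and G0: "smooth_manifold G0 A0"
    and s: "submersion G AG G0 A0 s" and g: "g \<in> topspace G"
  obtains N \<sigma> where "openin G0 N" "s g \<in> N" "\<sigma> (s g) = g"
    "\<And>x. x \<in> N \<Longrightarrow> \<sigma> x \<in> topspace G \<and> s (\<sigma> x) = x"
    "\<And>(D :: 'n::euclidean_space set) q. mplot G0 A0 D q \<Longrightarrow> q ` D \<subseteq> N \<Longrightarrow>
       mplot G AG D (\<lambda>r. \<sigma> (q r))"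
proof -
  obtain Wg \<kappa> W0 \<phi>0 V \<tau> where Wg: "(Wg,\<kappa>) \<in> AG" "g \<in> Wg" and W0: "(W0,\<phi>0) \<in> A0" "s g \<in> W0"
    and V: "open V" "\<phi>0 (s g) \<in> V" and \<tau>: "smooth_on V \<tau>"
    and \<tau>_V: "\<tau> ` V \<subseteq> \<kappa> ` (Wg \<inter> topspace G \<inter> s -` W0)"
    and right_inv: "\<And>z. z \<in> V \<Longrightarrow> \<phi>0 (s (inv_into Wg \<kappa> (\<tau> z))) = z"
    and \<tau>_g: "\<tau> (\<phi>0 (s g)) = \<kappa> g"
    using submersion_chart_section[OF assms] by blast
  have atlas: "topological_atlas G AG" "topological_atlas G0 A0"
    using G G0 smooth_manifold_imp_topological_atlas by auto
  define N where "N = {x \<in> W0. \<phi>0 x \<in> V}"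
  define \<sigma> where "\<sigma> x = inv_into Wg \<kappa> (\<tau> (\<phi>0 x))" for x
  have W0_G0: "W0 \<subseteq> topspace G0"
    using openin_chart_domain[OF atlas(2) W0(1)] openin_subset by blast
  have "openin (subtopology G0 W0) {x \<in> topspace (subtopology G0 W0). \<phi>0 x \<in> V}"
    using openin_continuous_map_preimage[OF continuous_map_chart[OF atlas(2) W0(1)]] V(1) by simp
  then have "openin G0 N"
    unfolding N_def using W0_G0 openin_trans_full[OF _ openin_chart_domain[OF atlas(2) W0(1)]]
    by (simp add: Int_absorb1)
  moreover have "s g \<in> N" using W0(2) V(2) by (simp add: N_def)
  moreover have "\<sigma> (s g) = g" unfolding \<sigma>_def \<tau>_g using inv_into_chart[OF atlas(1) Wg] .
  moreover have "\<sigma> x \<in> topspace G \<and> s (\<sigma> x) = x" if x: "x \<in> N" for x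
  proof -
    have "\<tau> (\<phi>0 x) \<in> \<kappa> ` (Wg \<inter> topspace G \<inter> s -` W0)" using \<tau>_V x by (auto simp: N_def)
    then obtain y where y: "y \<in> Wg" "y \<in> topspace G" "s y \<in> W0" "\<tau> (\<phi>0 x) = \<kappa> y" by blast
    then have "\<sigma> x = y" unfolding \<sigma>_def using inv_into_chart[OF atlas(1) Wg(1)] by simp
    have "\<phi>0 (s (\<sigma> x)) = \<phi>0 x" using right_inv x by (simp add: N_def \<sigma>_def)
    then have "s (\<sigma> x) = x"
      by (rule inj_onD[OF inj_on_chart[OF atlas(2) W0(1)]]) (use y \<open>\<sigma> x = y\<close> x in \<open>auto simp: N_def\<close>)
    with y(2) \<open>\<sigma> x = y\<close> show ?thesis by simp
  qed
  moreover have "mplot G AG D (\<lambda>r. \<sigma> (q r))" if q: "mplot G0 A0 D q" "q ` D \<subseteq> N"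
    for D :: "'n::euclidean_space set" and q
  proof -
    have D: "open D" using q(1) unfolding mplot_def by blast
    have "D \<inter> q -` W0 = D" using q(2) by (auto simp: N_def)
    then have "smooth_on D (\<lambda>r. \<phi>0 (q r))" using q(1) W0(1) unfolding mplot_def by (auto simp: o_def)
    moreover have "(\<lambda>r. \<phi>0 (q r)) ` D \<subseteq> V" using q(2) by (auto simp: N_def)
    ultimately have "smooth_on D (\<lambda>r. \<tau> (\<phi>0 (q r)))" using smooth_on_compose[OF D V(1) _ _ \<tau>] by blast
    moreover have "(\<lambda>r. \<tau> (\<phi>0 (q r))) ` D \<subseteq> \<kappa> ` Wg"
      using \<tau>_V q(2) unfolding N_def by blast
    ultimately show ?thesis
      unfolding \<sigma>_def by (rule mplot_chart_inv[OF G Wg(1) D])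
  qed
  ultimately show ?thesis using that by blast
qed

lemma mplot_lift_submersion:
  fixes D :: "'n::euclidean_space set"
  assumes G: "smooth_manifold G AG" and G0: "smooth_manifold G0 A0"
    and s: "submersion G AG G0 A0 s" and g: "g \<in> topspace G"
    and q: "mplot G0 A0 D q" and r: "r \<in> D" "q r = s g"
  obtains D' q' where "r \<in> D'" "D' \<subseteq> D" "mplot G AG D' q'" "q' r = g"
    "\<And>r'. r' \<in> D' \<Longrightarrow> s (q' r') = q r'"
proof -
  obtain N \<sigma> where N: "openin G0 N" "s g \<in> N" and \<sigma>_g: "\<sigma> (s g) = g"
    and \<sigma>: "\<And>x. x \<in> N \<Longrightarrow> \<sigma> x \<in> topspace G \<and> s (\<sigma> x) = x"
    and plot: "\<And>(D :: 'n set) q. mplot G0 A0 D q \<Longrightarrow> q ` D \<subseteq> N \<Longrightarrow> mplot G AG D (\<lambda>r. \<sigma> (q r))"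
    using submersion_local_section[OF assms(1-4)] by metis
  define D' where "D' = D \<inter> q -` N"
  have "open D'"
    unfolding D'_def using q open_vimage_continuous_map[OF _ N(1)] unfolding mplot_def by blast
  then have "mplot G AG D' (\<lambda>r. \<sigma> (q r))"
    by (intro plot mplot_subset[OF q]) (auto simp: D'_def)
  with r N \<sigma> \<sigma>_g show ?thesis
    by (intro that[of D' "\<lambda>r. \<sigma> (q r)"]) (auto simp: D'_def)
qed


section \<open>Quotient diffeologies of open subsets\<close>

lemma qplot_mono: "qplot X A S R D P \<Longrightarrow> S \<subseteq> S' \<Longrightarrow> qplot X A S' R D P"
  unfolding qplot_def by (meson order_trans)

lemma qplot_cong:
  assumes "\<And>r x. r \<in> D \<Longrightarrow> x \<in> S \<Longrightarrow> P r = R `` {x} \<longleftrightarrow> P' r = R' `` {x}"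
  shows "qplot X A S R D P \<longleftrightarrow> qplot X A S R' D P'"
proof -
  have "(\<forall>r'\<in>D'. P r' = R `` {q r'}) \<longleftrightarrow> (\<forall>r'\<in>D'. P' r' = R' `` {q r'})"
    if "D' \<subseteq> D" "q ` D' \<subseteq> S" for D' q
    using assms that by blast
  then show ?thesis unfolding qplot_def by (metis (no_types, lifting))
qed

lemma qplot_restrict_iff:
  fixes D :: "'n::euclidean_space set"
  assumes U: "U \<subseteq> topspace X" and P: "P ` D \<subseteq> (\<lambda>x. R `` {x}) ` U"
    and move: "\<And>(D' :: 'n set) q r x. mplot X A D' q \<Longrightarrow> r \<in> D' \<Longrightarrow> x \<in> U \<Longrightarrow>
      R `` {q r} = R `` {x} \<Longrightarrow>
      \<exists>D'' q'. r \<in> D'' \<and> D'' \<subseteq> D' \<and> mplot X A D'' q' \<and> q' ` D'' \<subseteq> U \<and>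
        (\<forall>r'\<in>D''. R `` {q' r'} = R `` {q r'})"
  shows "qplot X A U R D P \<longleftrightarrow> qplot X A (topspace X) R D P"
proof
  assume "qplot X A U R D P"
  then show "qplot X A (topspace X) R D P" using U by (rule qplot_mono)
next
  assume plot: "qplot X A (topspace X) R D P"
  show "qplot X A U R D P"
    unfolding qplot_def
  proof (intro conjI ballI)
    show "open D" using plot unfolding qplot_def by blast
    fix r assume r: "r \<in> D"
    obtain D1 q where q: "r \<in> D1" "D1 \<subseteq> D" "mplot X A D1 q" and P_q: "\<forall>r'\<in>D1. P r' = R `` {q r'}"
      using plot r unfolding qplot_def by blast
    obtain x where x: "x \<in> U" "P r = R `` {x}" using P r by blast
    then have "R `` {q r} = R `` {x}" using P_q q(1) by simp
    then obtain D2 q' where "r \<in> D2" "D2 \<subseteq> D1" "mplot X A D2 q'" "q' ` D2 \<subseteq> U"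
      "\<forall>r'\<in>D2. R `` {q' r'} = R `` {q r'}"
      using move[OF q(3) q(1) x(1)] by blast
    then show "\<exists>D' q. r \<in> D' \<and> D' \<subseteq> D \<and> mplot X A D' q \<and> q ` D' \<subseteq> U \<and>
        (\<forall>r'\<in>D'. P r' = R `` {q r'})"
      using q(2) P_q by (intro exI[of _ D2] exI[of _ q']) auto
  qed
qed

lemma equiv_restrict: "equiv X R \<Longrightarrow> U \<subseteq> X \<Longrightarrow> equiv U (R \<inter> U \<times> U)"
  unfolding equiv_def refl_on_def sym_def trans_def by blast

lemma induced_map_restricted_class:
  assumes R: "equiv X R" and U: "U \<subseteq> X" "x \<in> U"
  shows "induced_map R ((R \<inter> U \<times> U) `` {x}) = R `` {x}"
proof -
  have "x \<in> (R \<inter> U \<times> U) `` {x}" using equiv_class_self[OF equiv_restrict[OF R U(1)] U(2)] .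
  then have "(SOME y. y \<in> (R \<inter> U \<times> U) `` {x}) \<in> (R \<inter> U \<times> U) `` {x}" by (rule someI)
  then have "(x, SOME y. y \<in> (R \<inter> U \<times> U) `` {x}) \<in> R" by blast
  then show ?thesis unfolding induced_map_def using equiv_class_eq[OF R] by simp
qed

lemma bij_betw_induced_map:
  assumes R: "equiv X R" and U: "U \<subseteq> X"
  shows "bij_betw (induced_map R) (U // (R \<inter> U \<times> U)) ((\<lambda>x. R `` {x}) ` U)"
  unfolding bij_betw_def
proof
  show "inj_on (induced_map R) (U // (R \<inter> U \<times> U))"
  proof (rule inj_onI)
    fix C C' assume "C \<in> U // (R \<inter> U \<times> U)" "C' \<in> U // (R \<inter> U \<times> U)"
      and eq: "induced_map R C = induced_map R C'"
    then obtain x y where x: "x \<in> U" "C = (R \<inter> U \<times> U) `` {x}"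
      and y: "y \<in> U" "C' = (R \<inter> U \<times> U) `` {y}"
      by (auto elim!: quotientE)
    then have "R `` {x} = R `` {y}" using eq induced_map_restricted_class[OF R U] by simp
    then have "(x, y) \<in> R \<inter> U \<times> U" using eq_equiv_class[OF _ R] x y U by blast
    then show "C = C'" using x y equiv_class_eq[OF equiv_restrict[OF R U]] by simp
  qed
  show "induced_map R ` (U // (R \<inter> U \<times> U)) = (\<lambda>x. R `` {x}) ` U"
    using induced_map_restricted_class[OF R U] by (auto simp: quotient_def image_iff)
qed

lemma qplot_induced_map_iff:
  assumes R: "equiv X R" and U: "U \<subseteq> X" and P: "P ` D \<subseteq> U // (R \<inter> U \<times> U)"
  shows "qplot Y A U (R \<inter> U \<times> U) D P \<longleftrightarrow> qplot Y A U R D (induced_map R \<circ> P)"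
proof (rule qplot_cong)
  fix r x assume r: "r \<in> D" and x: "x \<in> U"
  have "P r \<in> U // (R \<inter> U \<times> U)" "(R \<inter> U \<times> U) `` {x} \<in> U // (R \<inter> U \<times> U)"
    using P r x by (auto intro: quotientI)
  then show "P r = (R \<inter> U \<times> U) `` {x} \<longleftrightarrow> (induced_map R \<circ> P) r = R `` {x}"
    using bij_betw_imp_inj_on[OF bij_betw_induced_map[OF R U]] induced_map_restricted_class[OF R U x]
    by (auto dest: inj_onD)
qed


section \<open>Lie groupoids\<close>

lemma orbit_rel_restrict: "U \<subseteq> V \<Longrightarrow> orbit_rel G s t U = orbit_rel G s t V \<inter> U \<times> U"
  unfolding orbit_rel_def by auto

lemma equiv_orbit_rel:
  assumes "lie_groupoid G AG G0 A0 s t m u i"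
  shows "equiv (topspace G0) (orbit_rel G s t (topspace G0))"
proof -
  have st: "\<And>g. g \<in> topspace G \<Longrightarrow> s g \<in> topspace G0 \<and> t g \<in> topspace G0 \<and> i g \<in> topspace G"
    and unit: "\<And>x. x \<in> topspace G0 \<Longrightarrow> u x \<in> topspace G \<and> s (u x) = x \<and> t (u x) = x"
    and mult: "\<And>g h. g \<in> topspace G \<Longrightarrow> h \<in> topspace G \<Longrightarrow> s g = t h \<Longrightarrow>
                 m g h \<in> topspace G \<and> s (m g h) = s h \<and> t (m g h) = t g"
    and inv: "\<And>g. g \<in> topspace G \<Longrightarrow> s (i g) = t g \<and> t (i g) = s g"
    using assms unfolding lie_groupoid_def by blast+
  let ?R = "orbit_rel G s t (topspace G0)"
  show ?thesis
    unfolding equiv_def refl_on_def sym_def trans_def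
  proof (intro conjI allI impI ballI)
    show "?R \<subseteq> topspace G0 \<times> topspace G0" unfolding orbit_rel_def by auto
    show "(x, x) \<in> ?R" if "x \<in> topspace G0" for x
      using unit[OF that] that unfolding orbit_rel_def by blast
    show "(y, x) \<in> ?R" if "(x, y) \<in> ?R" for x y
      using that st inv unfolding orbit_rel_def by blast
    show "(x, z) \<in> ?R" if xy: "(x, y) \<in> ?R" and yz: "(y, z) \<in> ?R" for x y z
    proof -
      obtain g h where "g \<in> topspace G" "h \<in> topspace G" "s g = x" "t g = y" "s h = y" "t h = z"
        "x \<in> topspace G0" "z \<in> topspace G0"
        using xy yz unfolding orbit_rel_def by blast
      then show ?thesis using mult[of h g] unfolding orbit_rel_def by auto
    qed
  qed
qed

lemma lie_groupoid_move_plot: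
  fixes D :: "'n::euclidean_space set"
  assumes lg: "lie_groupoid G AG G0 A0 s t m u i" and U: "openin G0 U"
    and q: "mplot G0 A0 D q" and r: "r \<in> D" and x: "x \<in> U"
    and orbit: "orbit_rel G s t (topspace G0) `` {q r} = orbit_rel G s t (topspace G0) `` {x}"
  shows "\<exists>D' q'. r \<in> D' \<and> D' \<subseteq> D \<and> mplot G0 A0 D' q' \<and> q' ` D' \<subseteq> U \<and>
           (\<forall>r'\<in>D'. orbit_rel G s t (topspace G0) `` {q' r'} = orbit_rel G s t (topspace G0) `` {q r'})"
proof -
  let ?R = "orbit_rel G s t (topspace G0)"
  have G: "smooth_manifold G AG" and G0: "smooth_manifold G0 A0"
    and s: "submersion G AG G0 A0 s" and t: "smooth_map G AG G0 A0 t"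
    and st: "\<And>g. g \<in> topspace G \<Longrightarrow> s g \<in> topspace G0 \<and> t g \<in> topspace G0"
    using lg unfolding lie_groupoid_def by blast+
  have R: "equiv (topspace G0) ?R" using equiv_orbit_rel[OF lg] .
  have "q r \<in> topspace G0" "x \<in> topspace G0"
    using q r x openin_subset[OF U] unfolding mplot_def by auto
  then have "(q r, x) \<in> ?R" using orbit equiv_class_eq_iff[OF R] by blast
  then obtain g where g: "g \<in> topspace G" "s g = q r" "t g = x"
    unfolding orbit_rel_def by blast
  obtain D2 q2 where D2: "r \<in> D2" "D2 \<subseteq> D" and q2: "mplot G AG D2 q2" "q2 r = g"
    and s_q2: "\<And>r'. r' \<in> D2 \<Longrightarrow> s (q2 r') = q r'"
    using mplot_lift_submersion[OF G G0 s g(1) q r g(2)[symmetric]] by blast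
  have q2_G: "q2 ` D2 \<subseteq> topspace G" using q2(1) unfolding mplot_def by blast
  have t_q2: "mplot G0 A0 D2 (\<lambda>r'. t (q2 r'))"
    using mplot_compose[OF smooth_manifold_imp_topological_atlas[OF G]
        smooth_manifold_imp_topological_atlas[OF G0] q2(1) q2_G] t
    unfolding smooth_map_def by blast
  define D3 where "D3 = D2 \<inter> (\<lambda>r'. t (q2 r')) -` U"
  have "open D3"
    unfolding D3_def using t_q2 open_vimage_continuous_map[OF _ U] unfolding mplot_def by blast
  then have "mplot G0 A0 D3 (\<lambda>r'. t (q2 r'))" by (rule mplot_subset[OF t_q2]) (auto simp: D3_def)
  moreover have "?R `` {t (q2 r')} = ?R `` {q r'}" if "r' \<in> D3" for r'
  proof -
    have "q2 r' \<in> topspace G" "r' \<in> D2" using q2_G that by (auto simp: D3_def)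
    then have "(q r', t (q2 r')) \<in> ?R"
      using st s_q2 unfolding orbit_rel_def by fastforce
    then show ?thesis using equiv_class_eq[OF R] by simp
  qed
  ultimately show ?thesis
    using D2 q2(2) g(3) x by (intro exI[of _ D3] exI[of _ "\<lambda>r'. t (q2 r')"]) (auto simp: D3_def)
qed

lemma bij_betw_orbit_rel_induced_map:
  assumes lg: "lie_groupoid G AG G0 A0 s t m u i" and U: "openin G0 U"
  defines "R \<equiv> orbit_rel G s t (topspace G0)"
  shows "bij_betw (induced_map R) (U // orbit_rel G s t U) ((\<lambda>x. R `` {x}) ` U)"
proof -
  have U_G0: "U \<subseteq> topspace G0" using U openin_subset by blast
  show ?thesis
    using bij_betw_induced_map[OF equiv_orbit_rel[OF lg] U_G0]
    unfolding R_def orbit_rel_restrict[OF U_G0] .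
qed

lemma lie_groupoid_qplot_restrict_iff:
  fixes D :: "'n::euclidean_space set"
  assumes lg: "lie_groupoid G AG G0 A0 s t m u i" and U: "openin G0 U"
    and P: "P ` D \<subseteq> U // orbit_rel G s t U"
  defines "R \<equiv> orbit_rel G s t (topspace G0)"
  shows "qplot G0 A0 U (orbit_rel G s t U) D P \<longleftrightarrow>
         subset_plot (qplot G0 A0 (topspace G0) R) ((\<lambda>x. R `` {x}) ` U) D (induced_map R \<circ> P)"
proof -
  have U_G0: "U \<subseteq> topspace G0" using U openin_subset by blast
  have R: "equiv (topspace G0) R" unfolding R_def using equiv_orbit_rel[OF lg] .
  have RU: "orbit_rel G s t U = R \<inter> U \<times> U" unfolding R_def using orbit_rel_restrict[OF U_G0] .
  have img: "(induced_map R \<circ> P) ` D \<subseteq> (\<lambda>x. R `` {x}) ` U"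
    using P bij_betw_imp_surj_on[OF bij_betw_orbit_rel_induced_map[OF lg U, folded R_def]]
    by (auto simp: image_subset_iff)
  have "qplot G0 A0 U (orbit_rel G s t U) D P \<longleftrightarrow> qplot G0 A0 U R D (induced_map R \<circ> P)"
    unfolding RU by (rule qplot_induced_map_iff[OF R U_G0 P[unfolded RU]])
  also have "\<dots> \<longleftrightarrow> qplot G0 A0 (topspace G0) R D (induced_map R \<circ> P)"
    by (rule qplot_restrict_iff[OF U_G0 img lie_groupoid_move_plot[OF lg U, folded R_def]])
  also have "\<dots> \<longleftrightarrow> subset_plot (qplot G0 A0 (topspace G0) R) ((\<lambda>x. R `` {x}) ` U) D (induced_map R \<circ> P)"
    using img by (simp add: subset_plot_def)
  finally show ?thesis .
qed


section \<open>Smooth actions of Lie groups\<close>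

lemma topological_atlas_prod:
  assumes H: "topological_atlas H AH" and M: "topological_atlas M AM"
  shows "topological_atlas (prod_topology H M) (prod_atlas AH AM)"
  unfolding topological_atlas_def
proof (intro conjI ballI)
  fix C assume "C \<in> prod_atlas AH AM"
  then obtain W \<phi> V \<psi> where C: "C = (W \<times> V, \<lambda>(a,b). (\<phi> a, \<psi> b))" and W: "(W,\<phi>) \<in> AH"
    and V: "(V,\<psi>) \<in> AM" unfolding prod_atlas_def by blast
  have img: "(\<lambda>(a,b). (\<phi> a, \<psi> b)) ` (W \<times> V) = \<phi> ` W \<times> \<psi> ` V" by auto
  obtain \<phi>' where "homeomorphic_maps (subtopology H W) (top_of_set (\<phi> ` W)) \<phi> \<phi>'"
    using homeomorphic_map_chart[OF H W] homeomorphic_map_maps by blast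
  moreover obtain \<psi>' where "homeomorphic_maps (subtopology M V) (top_of_set (\<psi> ` V)) \<psi> \<psi>'"
    using homeomorphic_map_chart[OF M V] homeomorphic_map_maps by blast
  ultimately have "homeomorphic_maps (prod_topology (subtopology H W) (subtopology M V))
      (prod_topology (top_of_set (\<phi> ` W)) (top_of_set (\<psi> ` V)))
      (\<lambda>(x,y). (\<phi> x, \<psi> y)) (\<lambda>(x,y). (\<phi>' x, \<psi>' y))"
    unfolding homeomorphic_maps_prod by blast
  then have "homeomorphic_maps (subtopology (prod_topology H M) (W \<times> V))
      (top_of_set (\<phi> ` W \<times> \<psi> ` V)) (\<lambda>(x,y). (\<phi> x, \<psi> y)) (\<lambda>(x,y). (\<phi>' x, \<psi>' y))"
    by (simp add: subtopology_Times)
  then have "homeomorphic_map (subtopology (prod_topology H M) (W \<times> V))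
      (top_of_set ((\<lambda>(a,b). (\<phi> a, \<psi> b)) ` (W \<times> V))) (\<lambda>(x,y). (\<phi> x, \<psi> y))"
    unfolding img homeomorphic_map_maps by blast
  moreover have "openin (prod_topology H M) (W \<times> V)"
    using openin_chart_domain[OF H W] openin_chart_domain[OF M V] by (simp add: openin_prod_Times_iff)
  moreover have "open ((\<lambda>(a,b). (\<phi> a, \<psi> b)) ` (W \<times> V))"
    unfolding img using open_chart_image[OF H W] open_chart_image[OF M V] by (simp add: open_Times)
  ultimately show "case C of (W, \<phi>) \<Rightarrow> openin (prod_topology H M) W \<and> open (\<phi> ` W) \<and>
      homeomorphic_map (subtopology (prod_topology H M) W) (top_of_set (\<phi> ` W)) \<phi>"
    unfolding C prod.case by (intro conjI)
next
  fix x assume "x \<in> topspace (prod_topology H M)"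
  then obtain a b where x: "x = (a, b)" "a \<in> topspace H" "b \<in> topspace M" by auto
  obtain W \<phi> where W: "(W,\<phi>) \<in> AH" "a \<in> W" using topological_atlas_cover[OF H x(2)] by blast
  obtain V \<psi> where V: "(V,\<psi>) \<in> AM" "b \<in> V" using topological_atlas_cover[OF M x(3)] by blast
  have "(W \<times> V, \<lambda>(a,b). (\<phi> a, \<psi> b)) \<in> prod_atlas AH AM"
    unfolding prod_atlas_def using W V by blast
  moreover have "x \<in> W \<times> V" using x W V by simp
  ultimately show "\<exists>(W, \<phi>)\<in>prod_atlas AH AM. x \<in> W" by (intro bexI) auto
qed

lemma mplot_const_Pair:
  assumes M: "topological_atlas M AM" and q: "mplot M AM D q" and g: "g \<in> topspace H"
  shows "mplot (prod_topology H M) (prod_atlas AH AM) D (\<lambda>r. (g, q r))"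
proof -
  have D: "open D" and q_M: "q ` D \<subseteq> topspace M" and cont: "continuous_map (top_of_set D) M q"
    and smooth: "\<And>W \<phi>. (W,\<phi>) \<in> AM \<Longrightarrow> smooth_on (D \<inter> q -` W) (\<phi> \<circ> q)"
    using q unfolding mplot_def by auto
  have "smooth_on (D \<inter> (\<lambda>r. (g, q r)) -` (W \<times> V)) (\<lambda>r. (\<phi> g, \<psi> (q r)))"
    if "(V,\<psi>) \<in> AM" for W \<phi> V \<psi>
  proof (cases "g \<in> W")
    case True
    then have "D \<inter> (\<lambda>r. (g, q r)) -` (W \<times> V) = D \<inter> q -` V" by auto
    moreover have "open (D \<inter> q -` V)"
      using open_vimage_continuous_map[OF cont openin_chart_domain[OF M that] D] .
    moreover have "smooth_on (D \<inter> q -` V) (\<lambda>r. \<psi> (q r))" using smooth[OF that] by (simp add: o_def)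
    ultimately show ?thesis by (simp add: smooth_on_Pair smooth_on_const)
  next
    case False
    then have "D \<inter> (\<lambda>r. (g, q r)) -` (W \<times> V) = {}" by auto
    then show ?thesis by (simp add: smooth_on_empty)
  qed
  then show ?thesis
    unfolding mplot_def prod_atlas_def
    using D q_M g cont by (auto simp: o_def continuous_map_paired)
qed

lemma action_orbit_rel_Image:
  "x \<in> topspace M \<Longrightarrow> action_orbit_rel H M act `` {x} = {act g x |g. g \<in> topspace H}"
  unfolding action_orbit_rel_def by auto

lemma action_orbit_rel_Image_act:
  assumes H: "lie_group H AH mul ginv e" and act: "smooth_action H AH mul e M AM act"
    and g: "g \<in> topspace H" and x: "x \<in> topspace M"
  shows "action_orbit_rel H M act `` {act g x} = action_orbit_rel H M act `` {x}"
proof -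
  have act_M: "act h y \<in> topspace M" if "h \<in> topspace H" "y \<in> topspace M" for h y
    using act that unfolding smooth_action_def smooth_map_def smooth_map_on_def by force
  have act_e: "\<And>y. y \<in> topspace M \<Longrightarrow> act e y = y"
    and act_mul: "\<And>h k y. h \<in> topspace H \<Longrightarrow> k \<in> topspace H \<Longrightarrow> y \<in> topspace M \<Longrightarrow>
      act (mul h k) y = act h (act k y)"
    using act unfolding smooth_action_def by blast+
  have mul: "\<And>h k. h \<in> topspace H \<Longrightarrow> k \<in> topspace H \<Longrightarrow> mul h k \<in> topspace H"
    and ginv: "ginv g \<in> topspace H" "mul (ginv g) g = e"
    using H g unfolding lie_group_def by blast+
  have "act (ginv g) (act g x) = x"
    using act_mul[OF ginv(1) g x] act_e[OF x] ginv(2) by simp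
  then have "act h x = act (mul h (ginv g)) (act g x)" if "h \<in> topspace H" for h
    using act_mul[OF that ginv(1) act_M[OF g x]] by simp
  moreover have "act h (act g x) = act (mul h g) x" if "h \<in> topspace H" for h
    using act_mul[OF that g x] by simp
  ultimately have "{act h (act g x) |h. h \<in> topspace H} = {act h x |h. h \<in> topspace H}"
    using mul g ginv(1) by blast
  then show ?thesis
    unfolding action_orbit_rel_Image[OF act_M[OF g x]] action_orbit_rel_Image[OF x] .
qed

lemma lie_group_action_move_plot:
  fixes D :: "'n::euclidean_space set"
  assumes H: "lie_group H AH mul ginv e" and M: "smooth_manifold M AM"
    and act: "smooth_action H AH mul e M AM act" and V: "openin M V"
    and q: "mplot M AM D q" and r: "r \<in> D" and x: "x \<in> V"
    and orbit: "action_orbit_rel H M act `` {q r} = action_orbit_rel H M act `` {x}"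
  shows "\<exists>D' q'. r \<in> D' \<and> D' \<subseteq> D \<and> mplot M AM D' q' \<and> q' ` D' \<subseteq> V \<and>
           (\<forall>r'\<in>D'. action_orbit_rel H M act `` {q' r'} = action_orbit_rel H M act `` {q r'})"
proof -
  have "smooth_manifold H AH" and e: "e \<in> topspace H"
    using H unfolding lie_group_def by simp_all
  then have atlas: "topological_atlas H AH" "topological_atlas M AM"
    using M by (simp_all add: smooth_manifold_imp_topological_atlas)
  have q_M: "q ` D \<subseteq> topspace M" using q unfolding mplot_def by simp
  have x_M: "x \<in> topspace M" using x openin_subset[OF V] by blast
  have "act e x = x" using act x_M unfolding smooth_action_def by simp
  then have "x \<in> action_orbit_rel H M act `` {q r}"
    unfolding orbit action_orbit_rel_Image[OF x_M] using e by force
  moreover have "q r \<in> topspace M" using q_M r by blast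
  ultimately obtain g where g: "g \<in> topspace H" "x = act g (q r)"
    unfolding action_orbit_rel_Image[OF \<open>q r \<in> topspace M\<close>] by blast
  have act_smooth: "smooth_map_on (prod_topology H M) (prod_atlas AH AM) M AM
      (topspace (prod_topology H M)) (\<lambda>(g,x). act g x)"
    using act unfolding smooth_action_def smooth_map_def by simp
  have "(\<lambda>r. (g, q r)) ` D \<subseteq> topspace (prod_topology H M)" using q_M g(1) by auto
  from mplot_compose[OF topological_atlas_prod[OF atlas] atlas(2)
      mplot_const_Pair[OF atlas(2) q g(1)] this act_smooth]
  have plot: "mplot M AM D (\<lambda>r'. act g (q r'))" by simp
  define D' where "D' = D \<inter> (\<lambda>r'. act g (q r')) -` V"
  have "open D'"
    unfolding D'_def using plot open_vimage_continuous_map[OF _ V] unfolding mplot_def by blast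
  then have "mplot M AM D' (\<lambda>r'. act g (q r'))" by (rule mplot_subset[OF plot]) (auto simp: D'_def)
  moreover have "action_orbit_rel H M act `` {act g (q r')} = action_orbit_rel H M act `` {q r'}"
    if "r' \<in> D'" for r'
    using action_orbit_rel_Image_act[OF H act g(1)] q_M that by (auto simp: D'_def)
  ultimately show ?thesis
    using r g(2) x by (intro exI[of _ D'] exI[of _ "\<lambda>r'. act g (q r')"]) (auto simp: D'_def)
qed

lemma lie_group_action_qplot_restrict_iff:
  fixes D :: "'n::euclidean_space set"
  assumes H: "lie_group H AH mul ginv e" and M: "smooth_manifold M AM"
    and act: "smooth_action H AH mul e M AM act" and V: "openin M V"
  defines "R \<equiv> action_orbit_rel H M act"
  shows "(P ` D \<subseteq> (\<lambda>x. R `` {x}) ` V \<and> qplot M AM V R D P) \<longleftrightarrow>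
         subset_plot (qplot M AM (topspace M) R) ((\<lambda>x. R `` {x}) ` V) D P"
proof -
  have "qplot M AM V R D P \<longleftrightarrow> qplot M AM (topspace M) R D P"
    if "P ` D \<subseteq> (\<lambda>x. R `` {x}) ` V"
    by (rule qplot_restrict_iff[OF openin_subset[OF V] that
          lie_group_action_move_plot[OF H M act V, folded R_def]])
  then show ?thesis unfolding subset_plot_def by blast
qed


theorem lemma5:
  shows
  "(\<forall>(G :: 'g topology) (AG :: ('g set \<times> ('g \<Rightarrow> 'c::euclidean_space)) set)
      (G0 :: 'o topology) (A0 :: ('o set \<times> ('o \<Rightarrow> 'b::euclidean_space)) set)
      s t m u i U.
     lie_groupoid G AG G0 A0 s t m u i \<and> openin G0 U \<longrightarrow>
     (let R = orbit_rel G s t (topspace G0);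
          RU = orbit_rel G s t U;
          \<pi> = (\<lambda>x. R `` {x});
          f = induced_map R
      in bij_betw f (U // RU) (\<pi> ` U) \<and>
         (\<forall>(D :: 'n::euclidean_space set) P. P ` D \<subseteq> U // RU \<longrightarrow>
            (qplot G0 A0 U RU D P \<longleftrightarrow>
             subset_plot (qplot G0 A0 (topspace G0) R) (\<pi> ` U) D (f \<circ> P)))))
   \<and>
   (\<forall>(H :: 'h topology) (AH :: ('h set \<times> ('h \<Rightarrow> 'd::euclidean_space)) set) mul ginv e
      (M :: 'a topology) (AM :: ('a set \<times> ('a \<Rightarrow> 'k::euclidean_space)) set) act V.
     lie_group H AH mul ginv e \<and> smooth_manifold M AM \<and> Hausdorff_space M \<and>
     second_countable M \<and> smooth_action H AH mul e M AM act \<and> openin M V \<longrightarrow>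
     (let R = action_orbit_rel H M act;
          \<pi> = (\<lambda>x. R `` {x})
      in \<forall>(D :: 'p::euclidean_space set) P.
           (P ` D \<subseteq> \<pi> ` V \<and> qplot M AM V R D P) \<longleftrightarrow>
           subset_plot (qplot M AM (topspace M) R) (\<pi> ` V) D P))"
  unfolding Let_def
  by (intro conjI allI impI; elim conjE)
     (rule bij_betw_orbit_rel_induced_map lie_groupoid_qplot_restrict_iff
        lie_group_action_qplot_restrict_iff; assumption)+


end
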